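(* In the setting of the context, there exists $\alpha_0>0$ such that for all $\alpha\in(0,\alpha_0)$ the matrices $I-\mathcal{H}_{11}$ and $I-\mathcal{H}_{22}$ are invertible, and the quantities $$q^\infty=(I-\mathcal{H}_{11})^{-1}u_q^\infty,\quad \hat{\mathbf Q}^\infty=(I-\mathcal{H}_{22})^{-1}(\mathcal{H}_{21}q^\infty+u_Q^\infty),\quad \delta^\infty=C_\delta\hat{\mathbf Q}^\infty$$ satisfy $q^\infty=O(\alpha)$, $\hat{\mathbf Q}^\infty=O(\alpha)$ and $\delta^\infty=O(\alpha)$ as $\alpha\to0^+$.
   Context: Setting. $\mathcal{S}$ is a finite set; $\{s^k\}_{k\ge0}$ is a Markov chain on $\mathcal{S}$ that is irreducible and aperiodic. A feature map $\phi:\mathcal{S}\to\mathbb{R}^p$ is given, with linearly independent feature vectors. $\gamma\in(0,1)$. There are $M$ agents with rewards $R_m:\mathcal{S}\times\mathcal{S}\to\mathbb{R}$. $W\in\mathbb{R}^{M\times M}$ is doubly stochastic with entries in $[0,1]$ whose off-diagonal sparsity pattern is that of a connected undirected graph. (These quantities describe decentralized TD(0) with learning rate $\alpha$: $\theta_m^{k+1}=\sum_{m'}W_{mm'}\theta_{m'}^k+\alpha\phi(s^k)[(\gamma\phi(s^{k+1})-\phi(s^k))^\top\theta_m^k+R_m(s^k,s^{k+1})]$.) Let $n=|\mathcal{S}|^2$, identify pairs $(s,s')$ with $\mathcal{N}=\{1,\dots,n\}$, and let $z^k$ be the index of $(s^k,s^{k+1})$; $\{z^k\}$ is a Markov chain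 with transition probabilities $p_{ij}=\mathbb{P}(z^{k+1}=j\mid z^k=i)$ and limiting distribution $p^\infty$. For $i\leftrightarrow(s,s')$: $A_i=\phi(s)(\gamma\phi(s')-\phi(s))^\top$, $b_{m,i}=R_m(s,s')\phi(s)$, $B_i=[b_{1,i}\cdots b_{M,i}]\in\mathbb{R}^{p\times M}$. $\bar A=\sum_ip_i^\infty A_i$ (which is Hurwitz), $\bar{\mathbf b}=\frac1M\sum_m\sum_ip_i^\infty b_{m,i}$, $\theta^*$ the unique solution of $\bar A\theta^*+\bar{\mathbf b}=0$, $\Theta^*=[\theta^*\cdots\theta^*]\in\mathbb{R}^{p\times M}$. $n_\xi=Mp$, $H_i=\alpha I_M\otimes A_i+W\otimes I_p$, $G_i=\alpha\,\mathrm{vec}(B_i+A_i\Theta^* )\in\mathbb{R}^{n_\xi}$ (vec stacks columns). $\mathcal{H}_{11}$, $\mathcal{H}_{22}$, $\mathcal{H}_{21}$ are $n\times n$ block matrices with $(j,i)$ blocks $p_{ij}H_i$, $p_{ij}H_i\otimes H_i$, $p_{ij}(H_i\otimes G_i+G_i\otimes H_i)$ respectively. $u_q^\infty\in\mathbb{R}^{nn_\xi}$ has $j$-th block $\sum_ip_{ij}p_i^\infty G_i$ and $u_Q^\infty\in\mathbb{R}^{nn_\xi^2}$ has $j$-th block $\sum_ip_{ij}p_i^\infty G_i\otimes G_i$. $C_\delta=\frac1M(\mathbf 1_n^\top\otimes\mathrm{vec}(I_{n_\xi})^\top)$. *)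

theory Defs
  imports "HOL-Analysis.Analysis" "HOL-Library.Landau_Symbols"
begin

(* Index conventions:  states 's, features 'p, agents 'm (all finite types).
   A pair index i = (s,s') : 's \<times> 's  (so n = |S|^2).
   The stacked parameter index is 'm \<times> 'p : (m,a) is the a-th entry of the m-th column
   (column-major vec, so n_xi = M p). *)

primrec mpow :: "real^('n::finite)^'n \<Rightarrow> nat \<Rightarrow> real^'n^'n" where
  "mpow A 0 = mat 1"
| "mpow A (Suc k) = A ** mpow A k"

definition stochastic_matrix :: "real^('n::finite)^'n \<Rightarrow> bool" where
  "stochastic_matrix P \<longleftrightarrow> (\<forall>i j. 0 \<le> P $ i $ j) \<and> (\<forall>i. (\<Sum>j\<in>UNIV. P $ i $ j) = 1)"

definition irreducible_chain :: "real^('n::finite)^'n \<Rightarrow> bool" where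
  "irreducible_chain P \<longleftrightarrow> (\<forall>i j. \<exists>k. mpow P k $ i $ j > 0)"

definition aperiodic_chain :: "real^('n::finite)^'n \<Rightarrow> bool" where
  "aperiodic_chain P \<longleftrightarrow> (\<forall>i. Gcd {k::nat. 0 < k \<and> mpow P k $ i $ i > 0} = 1)"

definition doubly_stochastic :: "real^('n::finite)^'n \<Rightarrow> bool" where
  "doubly_stochastic W \<longleftrightarrow> (\<forall>i j. 0 \<le> W $ i $ j) \<and> (\<forall>i. (\<Sum>j\<in>UNIV. W $ i $ j) = 1)
      \<and> (\<forall>j. (\<Sum>i\<in>UNIV. W $ i $ j) = 1)"

definition pattern_edges :: "real^('n::finite)^'n \<Rightarrow> ('n \<times> 'n) set" where
  "pattern_edges W = {(i,j). i \<noteq> j \<and> W $ i $ j \<noteq> 0}"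

definition connected_undirected_pattern :: "real^('n::finite)^'n \<Rightarrow> bool" where
  "connected_undirected_pattern W \<longleftrightarrow> sym (pattern_edges W) \<and> (\<forall>i j. (i,j) \<in> (pattern_edges W)\<^sup>*)"

(* the feature vectors (columns of the |S| x p feature matrix) are linearly independent *)
definition lin_indep_features :: "(('s::finite) \<Rightarrow> real^('p::finite)) \<Rightarrow> bool" where
  "lin_indep_features phi \<longleftrightarrow> (\<forall>c::real^'p. (\<forall>s. (\<Sum>k\<in>UNIV. c $ k * phi s $ k) = 0) \<longrightarrow> c = 0)"

(* transition matrix of the pair chain z^k = (s^k, s^{k+1}) : p_ij *)
definition pairP :: "real^('s::finite)^'s \<Rightarrow> real^('s\<times>'s)^('s\<times>'s)" where
  "pairP P = (\<chi> i j. if snd i = fst j then P $ fst j $ snd j else 0)"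

definition limiting_distribution :: "real^('n::finite)^'n \<Rightarrow> real^'n \<Rightarrow> bool" where
  "limiting_distribution Q pinf \<longleftrightarrow> (\<forall>i j. (\<lambda>k. mpow Q k $ i $ j) \<longlonglongrightarrow> pinf $ j)"

definition Amat :: "(('s::finite) \<Rightarrow> real^('p::finite)) \<Rightarrow> real \<Rightarrow> 's \<times> 's \<Rightarrow> real^'p^'p" where
  "Amat phi \<gamma> i = (\<chi> a b. phi (fst i) $ a * (\<gamma> * phi (snd i) $ b - phi (fst i) $ b))"

definition bvec :: "(('m::finite) \<Rightarrow> ('s::finite) \<Rightarrow> 's \<Rightarrow> real) \<Rightarrow> ('s \<Rightarrow> real^('p::finite)) \<Rightarrow> 'm \<Rightarrow> 's \<times> 's \<Rightarrow> real^'p" where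
  "bvec R phi m i = R m (fst i) (snd i) *\<^sub>R phi (fst i)"

definition Bmat :: "(('m::finite) \<Rightarrow> ('s::finite) \<Rightarrow> 's \<Rightarrow> real) \<Rightarrow> ('s \<Rightarrow> real^('p::finite)) \<Rightarrow> 's \<times> 's \<Rightarrow> real^'m^'p" where
  "Bmat R phi i = (\<chi> a m. bvec R phi m i $ a)"

definition Abar :: "(('s::finite) \<Rightarrow> real^('p::finite)) \<Rightarrow> real \<Rightarrow> real^('s\<times>'s) \<Rightarrow> real^'p^'p" where
  "Abar phi \<gamma> pinf = (\<Sum>i\<in>UNIV. pinf $ i *\<^sub>R Amat phi \<gamma> i)"

definition bbar :: "(('m::finite) \<Rightarrow> ('s::finite) \<Rightarrow> 's \<Rightarrow> real) \<Rightarrow> ('s \<Rightarrow> real^('p::finite)) \<Rightarrow> real^('s\<times>'s) \<Rightarrow> real^'p" where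
  "bbar R phi pinf = (1 / real CARD('m)) *\<^sub>R (\<Sum>m\<in>UNIV. \<Sum>i\<in>UNIV. pinf $ i *\<^sub>R bvec R phi m i)"

definition Theta :: "real^('p::finite) \<Rightarrow> real^('m::finite)^'p" where
  "Theta \<theta> = (\<chi> a m. \<theta> $ a)"

definition vecm :: "real^('m::finite)^('p::finite) \<Rightarrow> real^('m\<times>'p)" where
  "vecm X = (\<chi> x. X $ snd x $ fst x)"

definition kron :: "real^('b::finite)^('a::finite) \<Rightarrow> real^('d::finite)^('c::finite) \<Rightarrow> real^('b\<times>'d)^('a\<times>'c)" where
  "kron A B = (\<chi> r c. A $ fst r $ fst c * B $ snd r $ snd c)"

definition Hmat :: "(('s::finite) \<Rightarrow> real^('p::finite)) \<Rightarrow> real \<Rightarrow> real^('m::finite)^'m \<Rightarrow> real \<Rightarrow> 's \<times> 's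
                      \<Rightarrow> real^('m\<times>'p)^('m\<times>'p)" where
  "Hmat phi \<gamma> W \<alpha> i = \<alpha> *\<^sub>R kron (mat 1 :: real^'m^'m) (Amat phi \<gamma> i) + kron W (mat 1 :: real^'p^'p)"

definition Gvec :: "(('m::finite) \<Rightarrow> ('s::finite) \<Rightarrow> 's \<Rightarrow> real) \<Rightarrow> ('s \<Rightarrow> real^('p::finite)) \<Rightarrow> real \<Rightarrow> real^'p \<Rightarrow> real \<Rightarrow> 's \<times> 's
                      \<Rightarrow> real^('m\<times>'p)" where
  "Gvec R phi \<gamma> \<theta> \<alpha> i = \<alpha> *\<^sub>R vecm (Bmat R phi i + Amat phi \<gamma> i ** Theta \<theta>)"

(* (j,i) block of H11 is p_ij H_i *)
definition H11 :: "real^('s::finite)^'s \<Rightarrow> ('s \<Rightarrow> real^('p::finite)) \<Rightarrow> real \<Rightarrow> real^('m::finite)^'m \<Rightarrow> real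
       \<Rightarrow> real^(('s\<times>'s)\<times>('m\<times>'p))^(('s\<times>'s)\<times>('m\<times>'p))" where
  "H11 P phi \<gamma> W \<alpha> = (\<chi> r c. pairP P $ fst c $ fst r * Hmat phi \<gamma> W \<alpha> (fst c) $ snd r $ snd c)"

(* (j,i) block of H22 is p_ij (H_i \<otimes> H_i) *)
definition H22 :: "real^('s::finite)^'s \<Rightarrow> ('s \<Rightarrow> real^('p::finite)) \<Rightarrow> real \<Rightarrow> real^('m::finite)^'m \<Rightarrow> real
       \<Rightarrow> real^(('s\<times>'s)\<times>(('m\<times>'p)\<times>('m\<times>'p)))^(('s\<times>'s)\<times>(('m\<times>'p)\<times>('m\<times>'p)))" where
  "H22 P phi \<gamma> W \<alpha> = (\<chi> r c. pairP P $ fst c $ fst r *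
      kron (Hmat phi \<gamma> W \<alpha> (fst c)) (Hmat phi \<gamma> W \<alpha> (fst c)) $ snd r $ snd c)"

(* (j,i) block of H21 is p_ij (H_i \<otimes> G_i + G_i \<otimes> H_i), G_i viewed as an n_xi x 1 column *)
definition H21 :: "real^('s::finite)^'s \<Rightarrow> ('s \<Rightarrow> real^('p::finite)) \<Rightarrow> real \<Rightarrow> real^('m::finite)^'m \<Rightarrow> ('m \<Rightarrow> 's \<Rightarrow> 's \<Rightarrow> real)
       \<Rightarrow> real^'p \<Rightarrow> real
       \<Rightarrow> real^(('s\<times>'s)\<times>('m\<times>'p))^(('s\<times>'s)\<times>(('m\<times>'p)\<times>('m\<times>'p)))" where
  "H21 P phi \<gamma> W R \<theta> \<alpha> = (\<chi> r c. pairP P $ fst c $ fst r *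
      (Hmat phi \<gamma> W \<alpha> (fst c) $ fst (snd r) $ snd c * Gvec R phi \<gamma> \<theta> \<alpha> (fst c) $ snd (snd r)
       + Gvec R phi \<gamma> \<theta> \<alpha> (fst c) $ fst (snd r) * Hmat phi \<gamma> W \<alpha> (fst c) $ snd (snd r) $ snd c))"

definition uq :: "real^('s::finite)^'s \<Rightarrow> real^('s\<times>'s) \<Rightarrow> ('s \<Rightarrow> real^('p::finite)) \<Rightarrow> real \<Rightarrow> (('m::finite) \<Rightarrow> 's \<Rightarrow> 's \<Rightarrow> real)
       \<Rightarrow> real^'p \<Rightarrow> real \<Rightarrow> real^(('s\<times>'s)\<times>('m\<times>'p))" where
  "uq P pinf phi \<gamma> R \<theta> \<alpha> = (\<chi> r. \<Sum>i\<in>UNIV. pairP P $ i $ fst r * pinf $ i * Gvec R phi \<gamma> \<theta> \<alpha> i $ snd r)"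

definition uQ :: "real^('s::finite)^'s \<Rightarrow> real^('s\<times>'s) \<Rightarrow> ('s \<Rightarrow> real^('p::finite)) \<Rightarrow> real \<Rightarrow> (('m::finite) \<Rightarrow> 's \<Rightarrow> 's \<Rightarrow> real)
       \<Rightarrow> real^'p \<Rightarrow> real \<Rightarrow> real^(('s\<times>'s)\<times>(('m\<times>'p)\<times>('m\<times>'p)))" where
  "uQ P pinf phi \<gamma> R \<theta> \<alpha> = (\<chi> r. \<Sum>i\<in>UNIV. pairP P $ i $ fst r * pinf $ i *
      (Gvec R phi \<gamma> \<theta> \<alpha> i $ fst (snd r) * Gvec R phi \<gamma> \<theta> \<alpha> i $ snd (snd r)))"

definition Cdelta :: "real^(('z::finite)\<times>((('m::finite)\<times>('p::finite))\<times>('m\<times>'p))) \<Rightarrow> real" where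
  "Cdelta Q = (1 / real CARD('m)) * (\<Sum>j\<in>UNIV. \<Sum>x\<in>UNIV. Q $ (j, (x, x)))"

definition qinf where
  "qinf P pinf phi \<gamma> W R \<theta> \<alpha> =
     matrix_inv (mat 1 - H11 P phi \<gamma> W \<alpha>) *v uq P pinf phi \<gamma> R \<theta> \<alpha>"

definition Qinf where
  "Qinf P pinf phi \<gamma> W R \<theta> \<alpha> =
     matrix_inv (mat 1 - H22 P phi \<gamma> W \<alpha>) *v
       (H21 P phi \<gamma> W R \<theta> \<alpha> *v qinf P pinf phi \<gamma> W R \<theta> \<alpha> + uQ P pinf phi \<gamma> R \<theta> \<alpha>)"

definition deltainf where
  "deltainf P pinf phi \<gamma> W R \<theta> \<alpha> = Cdelta (Qinf P pinf phi \<gamma> W R \<theta> \<alpha>)"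

end

theory Submission
  imports Defs
begin

text \<open>
  Both \<open>I - H11\<close> and \<open>I - H22\<close> have the form \<open>M0 + \<alpha> M1 + \<alpha>\<^sup>2 M2\<close>, where \<open>M0 = I - (p_ij V)\<close> is
  built from a doubly stochastic \<open>V\<close> (\<open>W \<otimes> I\<close>, resp. its Kronecker square). \<open>M0\<close> is singular: its
  kernel consists of the stacked vectors \<open>(pinf_i s)_i\<close> with \<open>V s = s\<close>, and the vectors \<open>(t, ..., t)\<close>
  with \<open>V\<^sup>T t = t\<close> annihilate its range. A compactness argument shows that as soon as \<open>M1\<close> is
  nondegenerate between these two spaces, \<open>|M(\<alpha>) x| \<ge> c \<alpha> |x|\<close> for small \<open>\<alpha>\<close>, and the solutions of
  \<open>M(\<alpha>) z = u\<close> stay bounded when \<open>u\<close> is orthogonal to the vectors \<open>(t, ..., t)\<close>. The compressed \<open>M1\<close>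
  is the \<open>pinf\<close>-average of the blocks, which involves \<open>Abar\<close>; this is negative definite, and for
  \<open>H22\<close> the symmetric support of \<open>W\<close> lets one commute \<open>V\<close> past the Kronecker factors.

  Now \<open>uq = \<alpha> u\<close> with \<open>u\<close> orthogonal to the vectors \<open>(t, ..., t)\<close> precisely because \<open>\<theta>s\<close> solves
  \<open>Abar \<theta> + bbar = 0\<close>, so \<open>qinf = O(\<alpha>)\<close>; the right-hand side defining \<open>Qinf\<close> is then \<open>O(\<alpha>\<^sup>2)\<close>,
  so \<open>Qinf = O(\<alpha>)\<close>, and \<open>deltainf\<close> is a linear image of \<open>Qinf\<close>.
\<close>

section \<open>Singular perturbations of a matrix\<close>

lemma matrix_inv_right:
  fixes A :: "real^'n::finite^'n"
  assumes "invertible A"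
  shows "A ** matrix_inv A = mat 1"
proof -
  have "\<exists>A'. A ** A' = mat 1 \<and> A' ** A = mat 1" using assms by (simp add: invertible_def)
  hence "A ** matrix_inv A = mat 1 \<and> matrix_inv A ** A = mat 1"
    unfolding matrix_inv_def by (rule someI_ex)
  thus ?thesis by simp
qed

lemma matrix_vector_mul_inv_right:
  "invertible (A::real^'n::finite^'n) \<Longrightarrow> A *v (matrix_inv A *v v) = v"
  by (simp add: matrix_vector_mul_assoc matrix_inv_right)

lemma inverse_Suc_LIMSEQ: "(\<lambda>k::nat. 1 / (real k + 1)) \<longlonglongrightarrow> 0"
  using LIMSEQ_inverse_real_of_nat by (simp add: inverse_eq_divide add.commute)

locale singular_perturbation =
  fixes M0 M1 M2 :: "real^'n::finite^'n" and L :: "(real^'n) set"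
  assumes range_orthogonal: "\<And>l y. l \<in> L \<Longrightarrow> l \<bullet> (M0 *v y) = 0"
    and kernel_nondegenerate: "\<And>y. M0 *v y = 0 \<Longrightarrow> (\<forall>l\<in>L. l \<bullet> (M1 *v y) = 0) \<Longrightarrow> y = 0"
begin

abbreviation M :: "real \<Rightarrow> real^'n^'n" where
  "M \<alpha> \<equiv> M0 + \<alpha> *\<^sub>R M1 + \<alpha>\<^sup>2 *\<^sub>R M2"

lemma M_mv: "M \<alpha> *v x = M0 *v x + \<alpha> *\<^sub>R (M1 *v x) + \<alpha>\<^sup>2 *\<^sub>R (M2 *v x)"
  by (simp add: matrix_vector_mult_add_rdistrib scaleR_matrix_vector_assoc)

lemma orthogonal_M_mv:
  assumes "l \<in> L"
  shows "l \<bullet> (M \<alpha> *v x) = \<alpha> * (l \<bullet> (M1 *v x) + \<alpha> * (l \<bullet> (M2 *v x)))"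
  using range_orthogonal[OF assms]
  by (simp only: M_mv inner_add_right inner_scaleR_right) (simp add: power2_eq_square algebra_simps)

lemma no_asymptotic_null_sequence:
  fixes a :: "nat \<Rightarrow> real" and x :: "nat \<Rightarrow> real^'n"
  assumes a: "a \<longlonglongrightarrow> 0" and unit: "\<And>k. norm (x k) = 1"
    and null: "(\<lambda>k. M (a k) *v x k) \<longlonglongrightarrow> 0"
    and null_L: "\<And>l. l \<in> L \<Longrightarrow> (\<lambda>k. l \<bullet> (M1 *v x k) + a k * (l \<bullet> (M2 *v x k))) \<longlonglongrightarrow> 0"
  shows False
proof -
  have "compact (sphere (0::real^'n) 1)" by simp
  moreover have "\<forall>k. x k \<in> sphere 0 1" using unit by simp
  ultimately obtain y r where y: "y \<in> sphere 0 1" and r: "strict_mono r" and xr: "(x \<circ> r) \<longlonglongrightarrow> y"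
    using compact_imp_seq_compact seq_compactE by metis
  have ar: "(\<lambda>k. a (r k)) \<longlonglongrightarrow> 0"
    using LIMSEQ_subseq_LIMSEQ[OF a r] by (simp add: o_def)
  have lim_mv: "(\<lambda>k. A *v x (r k)) \<longlonglongrightarrow> A *v y" for A :: "real^'n^'n"
    using bounded_linear.tendsto[OF matrix_vector_mul_bounded_linear xr] by (simp add: o_def)
  have "(\<lambda>k. M (a (r k)) *v x (r k)) \<longlonglongrightarrow> M0 *v y + 0 *\<^sub>R (M1 *v y) + 0\<^sup>2 *\<^sub>R (M2 *v y)"
    unfolding M_mv by (intro tendsto_intros lim_mv ar)
  moreover have "(\<lambda>k. M (a (r k)) *v x (r k)) \<longlonglongrightarrow> 0"
    using LIMSEQ_subseq_LIMSEQ[OF null r] by (simp add: o_def)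
  ultimately have "M0 *v y = 0" using LIMSEQ_unique by fastforce
  moreover have "l \<bullet> (M1 *v y) = 0" if l: "l \<in> L" for l
  proof -
    have "(\<lambda>k. l \<bullet> (M1 *v x (r k)) + a (r k) * (l \<bullet> (M2 *v x (r k))))
        \<longlonglongrightarrow> l \<bullet> (M1 *v y) + 0 * (l \<bullet> (M2 *v y))"
      by (intro tendsto_intros lim_mv ar)
    moreover have "(\<lambda>k. l \<bullet> (M1 *v x (r k)) + a (r k) * (l \<bullet> (M2 *v x (r k)))) \<longlonglongrightarrow> 0"
      using LIMSEQ_subseq_LIMSEQ[OF null_L[OF l] r] by (simp add: o_def)
    ultimately show ?thesis using LIMSEQ_unique by fastforce
  qed
  ultimately have "y = 0" using kernel_nondegenerate by blast
  with y show False by simp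
qed

lemma lower_bound: "\<exists>c>0. \<forall>\<^sub>F \<alpha> in at_right 0. \<forall>x. c * \<alpha> * norm x \<le> norm (M \<alpha> *v x)"
proof (rule ccontr)
  assume contra: "\<not> ?thesis"
  have "\<exists>\<alpha> z. 0 < \<alpha> \<and> \<alpha> < 1 / (real k + 1) \<and> norm (M \<alpha> *v z) < 1 / (real k + 1) * \<alpha> * norm z"
    for k :: nat
  proof -
    have c: "0 < 1 / (real k + 1)" by simp
    with contra have "\<not> (\<exists>b>0. \<forall>\<alpha>>0. \<alpha> < b \<longrightarrow>
        (\<forall>x. 1 / (real k + 1) * \<alpha> * norm x \<le> norm (M \<alpha> *v x)))"
      unfolding eventually_at_right_field by blast
    with c show ?thesis by (meson not_le)
  qed
  then obtain a z where az: "\<And>k. 0 < a k \<and> a k < 1 / (real k + 1)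
      \<and> norm (M (a k) *v z k) < 1 / (real k + 1) * a k * norm (z k)"
    by metis
  have z_nz: "z k \<noteq> 0" for k using az[of k] by auto
  define x where "x k = (1 / norm (z k)) *\<^sub>R z k" for k
  have unit: "norm (x k) = 1" for k using z_nz by (simp add: x_def)
  have small: "norm (M (a k) *v x k) \<le> a k / (real k + 1)" for k
  proof -
    have "norm (M (a k) *v x k) = norm (M (a k) *v z k) / norm (z k)"
      by (simp add: x_def matrix_vector_mult_scaleR)
    also have "\<dots> \<le> a k / (real k + 1)"
      using az[of k] z_nz by (simp add: divide_simps)
    finally show ?thesis .
  qed
  have small': "norm (M (a k) *v x k) \<le> a k" for k
  proof -
    have "a k / (real k + 1) \<le> a k / 1"
      using az[of k] by (intro divide_left_mono) auto
    then show ?thesis using small[of k] by simp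
  qed
  have a0: "a \<longlonglongrightarrow> 0"
    using az by (intro Lim_null_comparison[OF _ inverse_Suc_LIMSEQ] always_eventually)
      (auto simp: abs_of_pos less_imp_le)
  show False
  proof (rule no_asymptotic_null_sequence[OF a0 unit])
    show "(\<lambda>k. M (a k) *v x k) \<longlonglongrightarrow> 0"
      using small' by (intro Lim_null_comparison[OF _ a0] always_eventually) auto
  next
    fix l assume l: "l \<in> L"
    have "norm (l \<bullet> (M1 *v x k) + a k * (l \<bullet> (M2 *v x k))) \<le> norm l * (1 / (real k + 1))" for k
    proof -
      have "a k * norm (l \<bullet> (M1 *v x k) + a k * (l \<bullet> (M2 *v x k))) = norm (l \<bullet> (M (a k) *v x k))"
        using az[of k] by (simp add: orthogonal_M_mv[OF l] abs_mult)
      also have "\<dots> \<le> norm l * norm (M (a k) *v x k)"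
        using Cauchy_Schwarz_ineq2 by simp
      also have "\<dots> \<le> a k * (norm l * (1 / (real k + 1)))"
        using mult_left_mono[OF small[of k] norm_ge_zero[of l]] by (simp add: mult.commute)
      finally show ?thesis using az[of k] by (meson mult_le_cancel_left_pos)
    qed
    then show "(\<lambda>k. l \<bullet> (M1 *v x k) + a k * (l \<bullet> (M2 *v x k))) \<longlonglongrightarrow> 0"
      by (intro Lim_null_comparison[OF _ tendsto_mult_right_zero[OF inverse_Suc_LIMSEQ]] always_eventually) auto
  qed
qed

lemma bounded_solution:
  assumes u: "\<forall>l\<in>L. l \<bullet> u = 0"
  shows "\<exists>C. \<forall>\<^sub>F \<alpha> in at_right 0. \<forall>z. M \<alpha> *v z = u \<longrightarrow> norm z \<le> C"
proof (rule ccontr)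
  assume contra: "\<not> ?thesis"
  have "\<exists>\<alpha> z. 0 < \<alpha> \<and> \<alpha> < 1 / (real k + 1) \<and> M \<alpha> *v z = u \<and> real k + 1 < norm z" for k :: nat
  proof -
    have "\<not> (\<exists>b>0. \<forall>\<alpha>>0. \<alpha> < b \<longrightarrow> (\<forall>z. M \<alpha> *v z = u \<longrightarrow> norm z \<le> real k + 1))"
      using contra unfolding eventually_at_right_field by blast
    moreover have "0 < 1 / (real k + 1)" by simp
    ultimately show ?thesis by (meson not_le)
  qed
  then obtain a z where az: "\<And>k. 0 < a k \<and> a k < 1 / (real k + 1) \<and> M (a k) *v z k = u
      \<and> real k + 1 < norm (z k)"
    by metis
  have z_pos: "0 < norm (z k)" for k using az[of k] by (smt (verit) of_nat_0_le_iff)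
  define x where "x k = (1 / norm (z k)) *\<^sub>R z k" for k
  have unit: "norm (x k) = 1" for k using z_pos by (simp add: x_def)
  have Mx: "M (a k) *v x k = (1 / norm (z k)) *\<^sub>R u" for k
    using az[of k] by (simp add: x_def matrix_vector_mult_scaleR)
  have a0: "a \<longlonglongrightarrow> 0"
    using az by (intro Lim_null_comparison[OF _ inverse_Suc_LIMSEQ] always_eventually)
      (auto simp: abs_of_pos less_imp_le)
  show False
  proof (rule no_asymptotic_null_sequence[OF a0 unit])
    have "norm (M (a k) *v x k) \<le> norm u * (1 / (real k + 1))" for k
      using az[of k] z_pos[of k] by (simp add: Mx divide_simps mult_left_mono)
    then show "(\<lambda>k. M (a k) *v x k) \<longlonglongrightarrow> 0"
      by (intro Lim_null_comparison[OF _ tendsto_mult_right_zero[OF inverse_Suc_LIMSEQ]] always_eventually) auto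
  next
    fix l assume l: "l \<in> L"
    have "a k * (l \<bullet> (M1 *v x k) + a k * (l \<bullet> (M2 *v x k))) = 0" for k
      using u l by (simp add: orthogonal_M_mv[OF l, symmetric] Mx)
    then have "l \<bullet> (M1 *v x k) + a k * (l \<bullet> (M2 *v x k)) = 0" for k
      using az[of k] by (metis mult_eq_0_iff order_less_irrefl)
    then show "(\<lambda>k. l \<bullet> (M1 *v x k) + a k * (l \<bullet> (M2 *v x k))) \<longlonglongrightarrow> 0"
      by simp
  qed
qed

lemma eventually_invertible: "\<forall>\<^sub>F \<alpha> in at_right 0. invertible (M \<alpha>)"
proof -
  obtain c where "c > 0" and lower: "\<forall>\<^sub>F \<alpha> in at_right 0. \<forall>x. c * \<alpha> * norm x \<le> norm (M \<alpha> *v x)"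
    using lower_bound by blast
  show ?thesis
    using lower eventually_at_right_less
  proof eventually_elim
    case (elim \<alpha>)
    have "x = 0" if "M \<alpha> *v x = 0" for x
      using elim(1)[rule_format, of x] that \<open>c > 0\<close> \<open>0 < \<alpha>\<close>
      by (simp add: mult_le_0_iff)
    then show "invertible (M \<alpha>)"
      using matrix_left_invertible_ker invertible_left_inverse by blast
  qed
qed

lemma inverse_orthogonal_bigo:
  assumes "\<forall>l\<in>L. l \<bullet> u = 0"
  shows "(\<lambda>\<alpha>. norm (matrix_inv (M \<alpha>) *v (\<alpha> *\<^sub>R u))) \<in> O[at_right 0](\<lambda>\<alpha>. \<alpha>)"
proof -
  obtain C where bound: "\<forall>\<^sub>F \<alpha> in at_right 0. \<forall>z. M \<alpha> *v z = u \<longrightarrow> norm z \<le> C"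
    using bounded_solution[OF assms] by blast
  have "\<forall>\<^sub>F \<alpha> in at_right 0. norm (norm (matrix_inv (M \<alpha>) *v (\<alpha> *\<^sub>R u))) \<le> C * norm \<alpha>"
    using bound eventually_invertible eventually_at_right_less
  proof eventually_elim
    case (elim \<alpha>)
    have "norm (matrix_inv (M \<alpha>) *v u) \<le> C"
      using elim by (simp add: matrix_vector_mul_inv_right)
    then show ?case
      using elim(3) by (simp add: matrix_vector_mult_scaleR mult.commute mult_left_mono)
  qed
  then show ?thesis by (rule bigoI)
qed

lemma inverse_bigo:
  assumes "(\<lambda>\<alpha>. norm (d \<alpha>)) \<in> O[at_right 0](\<lambda>\<alpha>. \<alpha>\<^sup>2)"
  shows "(\<lambda>\<alpha>. norm (matrix_inv (M \<alpha>) *v d \<alpha>)) \<in> O[at_right 0](\<lambda>\<alpha>. \<alpha>)"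
proof -
  obtain c where "c > 0" and lower: "\<forall>\<^sub>F \<alpha> in at_right 0. \<forall>x. c * \<alpha> * norm x \<le> norm (M \<alpha> *v x)"
    using lower_bound by blast
  obtain K where d: "\<forall>\<^sub>F \<alpha> in at_right 0. norm (d \<alpha>) \<le> K * \<alpha>\<^sup>2"
    using assms by (elim landau_o.bigE) auto
  have "\<forall>\<^sub>F \<alpha> in at_right 0. norm (norm (matrix_inv (M \<alpha>) *v d \<alpha>)) \<le> K / c * norm \<alpha>"
    using lower d eventually_invertible eventually_at_right_less
  proof eventually_elim
    case (elim \<alpha>)
    let ?w = "matrix_inv (M \<alpha>) *v d \<alpha>"
    have "c * \<alpha> * norm ?w \<le> K * \<alpha>\<^sup>2"
      using elim by (metis matrix_vector_mul_inv_right order.trans)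
    then have "c * norm ?w \<le> K * \<alpha>"
      using elim(4) by (simp add: power2_eq_square algebra_simps)
    then show ?case
      using \<open>c > 0\<close> elim(4) by (simp add: field_simps)
  qed
  then show ?thesis by (rule bigoI)
qed

end

lemma sum_UNIV_prod: "(\<Sum>r\<in>UNIV. f r) = (\<Sum>j\<in>UNIV. \<Sum>a\<in>UNIV. f (j, a))"
  by (metis UNIV_Times_UNIV sum.cartesian_product')

lemma sum_delta_mult: "(\<Sum>b\<in>UNIV. (if a = b then 1 else 0) * f b) = (f a::real)" for a :: "'a::finite"
  by (simp add: if_distrib[where f="\<lambda>x. x * _"] cong: if_cong)

lemma sum_matrix_vector_mult: "(\<Sum>i\<in>A. f i) *v x = (\<Sum>i\<in>A. f i *v (x::real^'n::finite))"
  by (induction A rule: infinite_finite_induct) (simp_all add: matrix_vector_mult_add_rdistrib)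

definition block :: "real^('z::finite\<times>'x::finite) \<Rightarrow> 'z \<Rightarrow> real^'x" where
  "block y i = (\<chi> b. y $ (i, b))"

lemma block_eq_0_iff: "(\<forall>i. block y i = 0) \<longleftrightarrow> y = 0"
  by (auto simp: vec_eq_iff block_def)

lemma inner_real_vec: "(x::real^'n::finite) \<bullet> y = (\<Sum>i\<in>UNIV. x $ i * y $ i)"
  by (simp add: inner_vec_def)

lemma norm_vec_power2: "(norm (x::real^'n::finite))\<^sup>2 = (\<Sum>i\<in>UNIV. (x $ i)\<^sup>2)"
  by (metis (no_types) dot_square_norm inner_real_vec power2_eq_square sum.cong)

lemma inner_transpose_mv: "t \<bullet> (V *v x) = (transpose V *v t) \<bullet> (x::real^'n::finite)"
  by (metis dot_lmul_matrix vector_transpose_matrix transpose_transpose)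

lemma matrix_vector_mult_uminus: "(- A) *v x = - (A *v (x::real^'n::finite))"
  by (simp add: matrix_vector_mult_def vec_eq_iff sum_negf)

lemma mpow_commute: "mpow A k ** A = A ** mpow A k"
proof (induction k)
  case 0 show ?case by simp
next
  case (Suc k) show ?case by (simp only: mpow.simps) (metis Suc.IH matrix_mul_assoc)
qed

lemma mpow_Suc_right: "mpow A (Suc k) = mpow A k ** A"
  by (simp only: mpow.simps mpow_commute)

lemma stochastic_matrix_nonneg: "stochastic_matrix P \<Longrightarrow> 0 \<le> P $ i $ j"
  by (simp add: stochastic_matrix_def)

lemma stochastic_matrix_row_sum: "stochastic_matrix P \<Longrightarrow> (\<Sum>j\<in>UNIV. P $ i $ j) = 1"
  by (simp add: stochastic_matrix_def)

lemma stochastic_matrix_mpow: "stochastic_matrix P \<Longrightarrow> stochastic_matrix (mpow P k)"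
proof (induction k)
  case 0 thus ?case
    by (auto simp: stochastic_matrix_def mat_def sum.delta)
next
  case (Suc k)
  have IH: "stochastic_matrix (mpow P k)" using Suc by simp
  have nn: "0 \<le> mpow P (Suc k) $ i $ j" for i j
    using stochastic_matrix_nonneg[OF Suc.prems] stochastic_matrix_nonneg[OF IH]
    by (simp add: matrix_matrix_mult_def sum_nonneg)
  have rs: "(\<Sum>j\<in>UNIV. mpow P (Suc k) $ i $ j) = 1" for i
  proof -
    have "(\<Sum>j\<in>UNIV. mpow P (Suc k) $ i $ j) = (\<Sum>j\<in>UNIV. \<Sum>l\<in>UNIV. P $ i $ l * mpow P k $ l $ j)"
      by (simp add: matrix_matrix_mult_def)
    also have "\<dots> = (\<Sum>l\<in>UNIV. P $ i $ l * (\<Sum>j\<in>UNIV. mpow P k $ l $ j))"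
      by (subst sum.swap) (simp add: sum_distrib_left)
    also have "\<dots> = 1" using stochastic_matrix_row_sum[OF IH] stochastic_matrix_row_sum[OF Suc.prems] by simp
    finally show ?thesis .
  qed
  show ?case using nn rs by (simp add: stochastic_matrix_def)
qed

lemma limiting_distribution_nonneg:
  assumes "stochastic_matrix Q" "limiting_distribution Q pinf"
  shows "0 \<le> pinf $ j"
proof -
  have "(\<lambda>k. mpow Q k $ undefined $ j) \<longlonglongrightarrow> pinf $ j"
    using assms(2) by (simp add: limiting_distribution_def)
  moreover have "\<forall>k. 0 \<le> mpow Q k $ undefined $ j"
    using stochastic_matrix_nonneg[OF stochastic_matrix_mpow[OF assms(1)]] by blast
  ultimately show ?thesis using LIMSEQ_le_const by blast
qed

lemma limiting_distribution_sum:
  assumes "stochastic_matrix Q" "limiting_distribution Q pinf"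
  shows "(\<Sum>j\<in>UNIV. pinf $ j) = 1"
proof -
  have "(\<lambda>k. \<Sum>j\<in>UNIV. mpow Q k $ undefined $ j) \<longlonglongrightarrow> (\<Sum>j\<in>UNIV. pinf $ j)"
    using assms(2) by (intro tendsto_sum) (simp add: limiting_distribution_def)
  moreover have "(\<lambda>k. \<Sum>j\<in>UNIV. mpow Q k $ undefined $ j) = (\<lambda>k. 1)"
    using stochastic_matrix_row_sum[OF stochastic_matrix_mpow[OF assms(1)]] by simp
  ultimately have "(\<lambda>k. 1::real) \<longlonglongrightarrow> (\<Sum>j\<in>UNIV. pinf $ j)" by simp
  from LIMSEQ_unique[OF this tendsto_const] show ?thesis by simp
qed

lemma limiting_distribution_stationary:
  assumes "stochastic_matrix Q" "limiting_distribution Q pinf"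
  shows "(\<Sum>i\<in>UNIV. pinf $ i * Q $ i $ j) = pinf $ j"
proof -
  have L: "\<And>i j. (\<lambda>k. mpow Q k $ i $ j) \<longlonglongrightarrow> pinf $ j"
    using assms(2) by (simp add: limiting_distribution_def)
  have "(\<lambda>k. \<Sum>l\<in>UNIV. mpow Q k $ undefined $ l * Q $ l $ j) \<longlonglongrightarrow> (\<Sum>l\<in>UNIV. pinf $ l * Q $ l $ j)"
    by (intro tendsto_intros L)
  moreover have "(\<lambda>k. \<Sum>l\<in>UNIV. mpow Q k $ undefined $ l * Q $ l $ j) = (\<lambda>k. mpow Q (Suc k) $ undefined $ j)"
    by (simp add: mpow_Suc_right matrix_matrix_mult_def del: mpow.simps)
  moreover have "(\<lambda>k. mpow Q (Suc k) $ undefined $ j) \<longlonglongrightarrow> pinf $ j"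
    using LIMSEQ_Suc[OF L] .
  ultimately have "(\<lambda>k. mpow Q (Suc k) $ undefined $ j) \<longlonglongrightarrow> (\<Sum>l\<in>UNIV. pinf $ l * Q $ l $ j)"
    by simp
  from LIMSEQ_unique[OF this \<open>(\<lambda>k. mpow Q (Suc k) $ undefined $ j) \<longlonglongrightarrow> pinf $ j\<close>] show ?thesis .
qed

lemma doubly_stochastic_nonneg: "doubly_stochastic V \<Longrightarrow> 0 \<le> V $ i $ j"
  by (simp add: doubly_stochastic_def)

lemma doubly_stochastic_row_sum: "doubly_stochastic V \<Longrightarrow> (\<Sum>j\<in>UNIV. V $ i $ j) = 1"
  by (simp add: doubly_stochastic_def)

lemma doubly_stochastic_col_sum: "doubly_stochastic V \<Longrightarrow> (\<Sum>i\<in>UNIV. V $ i $ j) = 1"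
  by (simp add: doubly_stochastic_def)

lemma doubly_stochastic_transpose: "doubly_stochastic V \<Longrightarrow> doubly_stochastic (transpose V)"
  by (simp add: doubly_stochastic_def transpose_def)

lemma doubly_stochastic_col_pos: "doubly_stochastic V \<Longrightarrow> \<exists>c'. V $ c' $ c > 0"
proof (rule ccontr)
  assume V: "doubly_stochastic V" and "\<not> (\<exists>c'. V $ c' $ c > 0)"
  hence "\<And>c'. V $ c' $ c = 0" using doubly_stochastic_nonneg[OF V] by (meson antisym not_le)
  thus False using doubly_stochastic_col_sum[OF V, of c] by simp
qed

lemma doubly_stochastic_mat1: "doubly_stochastic (mat 1 :: real^'n::finite^'n)"
  by (auto simp: doubly_stochastic_def mat_def sum.delta)

lemma doubly_stochastic_variance_identity:
  fixes V :: "real^'n::finite^'n"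
  assumes V: "doubly_stochastic V"
  shows "(norm (V *v z))\<^sup>2 + (\<Sum>x\<in>UNIV. \<Sum>y\<in>UNIV. V $ x $ y * (z $ y - (V *v z) $ x)\<^sup>2) = (norm z)\<^sup>2"
proof -
  have row: "(\<Sum>y\<in>UNIV. V $ x $ y * (z $ y - (V *v z) $ x)\<^sup>2)
      = (\<Sum>y\<in>UNIV. V $ x $ y * (z $ y)\<^sup>2) - ((V *v z) $ x)\<^sup>2" for x
  proof -
    let ?m = "(V *v z) $ x"
    have m: "?m = (\<Sum>y\<in>UNIV. V $ x $ y * z $ y)" by (simp add: matrix_vector_mult_def)
    have "(\<Sum>y\<in>UNIV. V $ x $ y * (z $ y - ?m)\<^sup>2)
        = (\<Sum>y\<in>UNIV. V $ x $ y * (z $ y)\<^sup>2) - 2 * ?m * (\<Sum>y\<in>UNIV. V $ x $ y * z $ y)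
          + ?m\<^sup>2 * (\<Sum>y\<in>UNIV. V $ x $ y)"
      by (simp add: power2_eq_square algebra_simps sum.distrib sum_subtractf sum_distrib_left)
    also have "\<dots> = (\<Sum>y\<in>UNIV. V $ x $ y * (z $ y)\<^sup>2) - ?m\<^sup>2"
      using doubly_stochastic_row_sum[OF V, of x] by (simp add: m[symmetric] power2_eq_square)
    finally show ?thesis .
  qed
  have "(norm (V *v z))\<^sup>2 + (\<Sum>x\<in>UNIV. \<Sum>y\<in>UNIV. V $ x $ y * (z $ y - (V *v z) $ x)\<^sup>2)
      = (\<Sum>x\<in>UNIV. \<Sum>y\<in>UNIV. V $ x $ y * (z $ y)\<^sup>2)"
    by (simp add: norm_vec_power2 row sum_subtractf)
  also have "\<dots> = (\<Sum>y\<in>UNIV. (\<Sum>x\<in>UNIV. V $ x $ y) * (z $ y)\<^sup>2)"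
    by (subst sum.swap) (simp add: sum_distrib_right)
  also have "\<dots> = (norm z)\<^sup>2" using doubly_stochastic_col_sum[OF V] by (simp add: norm_vec_power2)
  finally show ?thesis .
qed

lemma doubly_stochastic_norm_le:
  fixes V :: "real^'n::finite^'n"
  assumes V: "doubly_stochastic V"
  shows "norm (V *v z) \<le> norm z"
proof -
  have "0 \<le> (\<Sum>x\<in>UNIV. \<Sum>y\<in>UNIV. V $ x $ y * (z $ y - (V *v z) $ x)\<^sup>2)"
    using doubly_stochastic_nonneg[OF V] by (intro sum_nonneg mult_nonneg_nonneg) auto
  then have "(norm (V *v z))\<^sup>2 \<le> (norm z)\<^sup>2"
    using doubly_stochastic_variance_identity[OF V, of z] by linarith
  then show ?thesis by (simp add: power2_le_iff_abs_le)
qed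

lemma doubly_stochastic_norm_eq_imp_eq:
  fixes V :: "real^'n::finite^'n"
  assumes V: "doubly_stochastic V" and eq: "norm (V *v z) = norm z" and edge: "V $ x $ y \<noteq> 0"
  shows "(V *v z) $ x = z $ y"
proof -
  have terms: "0 \<le> V $ x $ y * (z $ y - (V *v z) $ x)\<^sup>2" for x y
    using doubly_stochastic_nonneg[OF V] by simp
  have "(\<Sum>x\<in>UNIV. \<Sum>y\<in>UNIV. V $ x $ y * (z $ y - (V *v z) $ x)\<^sup>2) = 0"
    using doubly_stochastic_variance_identity[OF V, of z] eq by simp
  then have "V $ x $ y * (z $ y - (V *v z) $ x)\<^sup>2 = 0"
    using terms by (simp add: sum_nonneg_eq_0_iff sum_nonneg)
  then show ?thesis using edge by simp
qed

lemma doubly_stochastic_mpow_norm_le: "doubly_stochastic V \<Longrightarrow> norm (mpow V k *v x) \<le> norm x"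
proof (induction k)
  case 0 thus ?case by simp
next
  case (Suc k)
  have "norm (mpow V (Suc k) *v x) = norm (V *v (mpow V k *v x))"
    by (simp add: matrix_vector_mul_assoc)
  also have "\<dots> \<le> norm (mpow V k *v x)" by (rule doubly_stochastic_norm_le[OF Suc.prems])
  finally show ?case using Suc by simp
qed

lemma doubly_stochastic_fixed_transpose:
  fixes V :: "real^'n::finite^'n"
  assumes V: "doubly_stochastic V" and s: "V *v s = s"
  shows "transpose V *v s = s"
proof -
  let ?u = "transpose V *v s"
  have "(norm (?u - s))\<^sup>2 = (?u - s) \<bullet> (?u - s)" by (simp add: dot_square_norm)
  also have "\<dots> = ?u \<bullet> ?u - 2 * (?u \<bullet> s) + s \<bullet> s"
    by (simp add: inner_diff_left inner_diff_right inner_commute)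
  also have "?u \<bullet> s = s \<bullet> s" using inner_transpose_mv[of s V s] s by simp
  also have "?u \<bullet> ?u - 2 * (s \<bullet> s) + s \<bullet> s = (norm ?u)\<^sup>2 - (norm s)\<^sup>2"
    by (simp add: dot_square_norm)
  finally have eq: "(norm (?u - s))\<^sup>2 = (norm ?u)\<^sup>2 - (norm s)\<^sup>2" .
  have "norm ?u \<le> norm s" by (rule doubly_stochastic_norm_le[OF doubly_stochastic_transpose[OF V]])
  hence "(norm ?u)\<^sup>2 \<le> (norm s)\<^sup>2" by (simp add: power_mono)
  hence "(norm (?u - s))\<^sup>2 \<le> 0" using eq by simp
  thus ?thesis by simp
qed

lemma doubly_stochastic_fixed_const:
  fixes W :: "real^'m::finite^'m"
  assumes W: "doubly_stochastic W" and con: "connected_undirected_pattern W"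
    and y: "W *v y = y"
  shows "y $ i = y $ j"
proof -
  have edge: "y $ x = y $ z" if "W $ x $ z \<noteq> 0" for x z
    using doubly_stochastic_norm_eq_imp_eq[OF W _ that, of y] y by simp
  have "(i, j) \<in> (pattern_edges W)\<^sup>*" using con unfolding connected_undirected_pattern_def by blast
  thus ?thesis
  proof (induction rule: rtrancl_induct)
    case base show ?case by simp
  next
    case (step b c)
    hence "W $ b $ c \<noteq> 0" by (simp add: pattern_edges_def)
    thus ?case using step.IH edge[of b c] by simp
  qed
qed

section \<open>Kronecker products and negative definiteness\<close>

lemma kron_mv: "(kron A B *v s) $ (x, c) = (\<Sum>y\<in>UNIV. \<Sum>z\<in>UNIV. A $ x $ y * B $ c $ z * s $ (y, z))"
  unfolding kron_def matrix_vector_mult_def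
  by (subst sum_UNIV_prod) simp

lemma kron_mat1_right_mv: "(kron A (mat 1) *v s) $ (x, c) = (\<Sum>y\<in>UNIV. A $ x $ y * s $ (y, c))"
proof -
  have "(kron A (mat 1) *v s) $ (x, c) = (\<Sum>y\<in>UNIV. A $ x $ y * (\<Sum>z\<in>UNIV. (if c = z then 1 else 0) * s $ (y, z)))"
    by (simp add: kron_mv mat_def sum_distrib_left mult.assoc)
  also have "\<dots> = (\<Sum>y\<in>UNIV. A $ x $ y * s $ (y, c))" by (simp only: sum_delta_mult)
  finally show ?thesis .
qed

lemma kron_mat1_left_mv: "(kron (mat 1) B *v s) $ (x, c) = (\<Sum>z\<in>UNIV. B $ c $ z * s $ (x, z))"
proof -
  have "(kron (mat 1) B *v s) $ (x, c) = (\<Sum>y\<in>UNIV. (if x = y then 1 else 0) * (\<Sum>z\<in>UNIV. B $ c $ z * s $ (y, z)))"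
    by (simp add: kron_mv mat_def sum_distrib_left mult.assoc)
  also have "\<dots> = (\<Sum>z\<in>UNIV. B $ c $ z * s $ (x, z))" by (simp only: sum_delta_mult)
  finally show ?thesis .
qed

lemma kron_mult: "kron A B ** kron C D = kron (A ** C) (B ** D)"
proof -
  have "(kron A B ** kron C D) $ r $ q = kron (A ** C) (B ** D) $ r $ q" for r q
  proof -
    have "(kron A B ** kron C D) $ r $ q
        = (\<Sum>m\<in>UNIV. \<Sum>n\<in>UNIV. A $ fst r $ m * C $ m $ fst q * (B $ snd r $ n * D $ n $ snd q))"
      unfolding matrix_matrix_mult_def kron_def by (subst sum_UNIV_prod) (simp add: ac_simps)
    also have "\<dots> = kron (A ** C) (B ** D) $ r $ q"
      by (simp add: kron_def matrix_matrix_mult_def sum_product)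
    finally show ?thesis .
  qed
  thus ?thesis by (simp add: vec_eq_iff)
qed

lemma transpose_kron: "transpose (kron A B) = kron (transpose A) (transpose B)"
  by (simp add: vec_eq_iff transpose_def kron_def)

lemma doubly_stochastic_kron:
  assumes "doubly_stochastic A" "doubly_stochastic B"
  shows "doubly_stochastic (kron A B)"
proof -
  have nn: "0 \<le> kron A B $ r $ q" for r q
    using doubly_stochastic_nonneg[OF assms(1)] doubly_stochastic_nonneg[OF assms(2)] by (simp add: kron_def)
  have rs: "(\<Sum>q\<in>UNIV. kron A B $ r $ q) = 1" for r
    by (simp add: kron_def sum_UNIV_prod[where f = "\<lambda>q. A $ fst r $ fst q * B $ snd r $ snd q"]
        sum_distrib_left[symmetric] sum_distrib_right[symmetric] doubly_stochastic_row_sum[OF assms(1)] doubly_stochastic_row_sum[OF assms(2)])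
  have cs: "(\<Sum>r\<in>UNIV. kron A B $ r $ q) = 1" for q
    by (simp add: kron_def sum_UNIV_prod[where f = "\<lambda>r. A $ fst r $ fst q * B $ snd r $ snd q"]
        sum_distrib_left[symmetric] sum_distrib_right[symmetric] doubly_stochastic_col_sum[OF assms(1)] doubly_stochastic_col_sum[OF assms(2)])
  show ?thesis using nn rs cs by (simp add: doubly_stochastic_def)
qed

lemma kron_square_fixed_commute:
  fixes V :: "real^'x::finite^'x" and s :: "real^('x\<times>'x)"
  assumes V: "doubly_stochastic V" and sym: "\<And>x y. V $ x $ y > 0 \<Longrightarrow> V $ y $ x > 0"
    and fixed: "kron V V *v s = s"
  shows "kron V (mat 1) *v s = kron (mat 1) V *v s"
proof -
  let ?A = "kron V (mat 1 :: real^'x^'x)" and ?B = "kron (mat 1 :: real^'x^'x) V"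
  have A: "doubly_stochastic ?A" and B: "doubly_stochastic ?B"
    by (simp_all add: doubly_stochastic_kron V doubly_stochastic_mat1)
  have "s = ?A *v (?B *v s)"
    using fixed by (simp add: matrix_vector_mul_assoc kron_mult)
  then have "norm s \<le> norm (?B *v s)" and "norm (?B *v s) \<le> norm s"
    using doubly_stochastic_norm_le[OF A, of "?B *v s"] doubly_stochastic_norm_le[OF B, of s] by simp_all
  then have eqA: "norm (?A *v (?B *v s)) = norm (?B *v s)" and eqB: "norm (?B *v s) = norm s"
    using \<open>s = _\<close> by simp_all
  have B_edge: "s $ (x, z) = (?B *v s) $ (x, c)" if "V $ c $ z > 0" for x z c
    using doubly_stochastic_norm_eq_imp_eq[OF B eqB, of "(x, c)" "(x, z)"] that
    by (simp add: kron_def mat_def)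
  have A_edge: "(?B *v s) $ (y, c) = s $ (x, c)" if "V $ x $ y > 0" for x y c
    using doubly_stochastic_norm_eq_imp_eq[OF A eqA, of "(x, c)" "(y, c)"] that \<open>s = _\<close>
    by (simp add: kron_def mat_def)
  have edge: "s $ (y, c) = (?B *v s) $ (x, c)" if xy: "V $ x $ y > 0" for x y c
  proof -
    obtain c' where c': "V $ c' $ c > 0" using doubly_stochastic_col_pos[OF V] by blast
    have "s $ (y, c) = (?B *v s) $ (y, c')" by (rule B_edge[OF c'])
    also have "\<dots> = s $ (x, c')" by (rule A_edge[OF xy])
    also have "\<dots> = (?B *v s) $ (x, c)" by (rule B_edge[OF sym[OF c']])
    finally show ?thesis .
  qed
  have "(?A *v s) $ (x, c) = (?B *v s) $ (x, c)" for x c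
  proof -
    have "(?A *v s) $ (x, c) = (\<Sum>y\<in>UNIV. V $ x $ y * s $ (y, c))" by (rule kron_mat1_right_mv)
    also have "\<dots> = (\<Sum>y\<in>UNIV. V $ x $ y * (?B *v s) $ (x, c))"
      using edge doubly_stochastic_nonneg[OF V] by (intro sum.cong refl) (metis less_eq_real_def mult_eq_0_iff)
    also have "\<dots> = (?B *v s) $ (x, c)"
      using doubly_stochastic_row_sum[OF V, of x] by (simp add: sum_distrib_right[symmetric])
    finally show ?thesis .
  qed
  then show ?thesis by (simp add: vec_eq_iff)
qed

lemma kron_mat1_transpose_fixed_const:
  fixes W :: "real^'m::finite^'m" and t :: "real^('m\<times>'p::finite)"
  assumes Wd: "doubly_stochastic W" and con: "connected_undirected_pattern W"
    and t: "transpose (kron W (mat 1 :: real^'p^'p)) *v t = t"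
  shows "t $ (m, a) = t $ (m', a)"
proof -
  have c: "transpose W *v (\<chi> m. t $ (m, a)) = (\<chi> m. t $ (m, a))"
  proof -
    have "(transpose W *v (\<chi> m. t $ (m, a))) $ m = t $ (m, a)" for m
    proof -
      have "t $ (m, a) = (transpose (kron W (mat 1 :: real^'p^'p)) *v t) $ (m, a)" using t by simp
      also have "\<dots> = (\<Sum>y\<in>UNIV. transpose W $ m $ y * t $ (y, a))"
        by (simp add: transpose_kron transpose_mat kron_mat1_right_mv)
      finally show ?thesis by (simp add: matrix_vector_mult_def)
    qed
    thus ?thesis by (simp add: vec_eq_iff)
  qed
  have "W *v (\<chi> m. t $ (m, a)) = (\<chi> m. t $ (m, a))"
    using doubly_stochastic_fixed_transpose[OF doubly_stochastic_transpose[OF Wd] c] by simp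
  from doubly_stochastic_fixed_const[OF Wd con this, of m m'] show ?thesis by simp
qed

definition neg_definite :: "real^'n::finite^'n \<Rightarrow> bool" where
  "neg_definite N \<longleftrightarrow> (\<forall>x. x \<noteq> 0 \<longrightarrow> x \<bullet> (N *v x) < 0)"

lemma neg_definite_sum:
  fixes f :: "'m::finite \<Rightarrow> real^'n::finite"
  assumes N: "neg_definite N" and nz: "\<exists>m. f m \<noteq> 0"
  shows "(\<Sum>m\<in>UNIV. f m \<bullet> (N *v f m)) < 0"
proof -
  obtain m0 where m0: "f m0 \<noteq> 0" using nz by blast
  have le: "f m \<bullet> (N *v f m) \<le> 0" for m
    using N unfolding neg_definite_def by (metis inner_zero_left less_eq_real_def order_refl)
  have "(\<Sum>m\<in>UNIV. f m \<bullet> (N *v f m)) = f m0 \<bullet> (N *v f m0) + (\<Sum>m\<in>UNIV - {m0}. f m \<bullet> (N *v f m))"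
    by (simp add: sum.remove)
  moreover have "(\<Sum>m\<in>UNIV - {m0}. f m \<bullet> (N *v f m)) \<le> 0" using le by (simp add: sum_nonpos)
  moreover have "f m0 \<bullet> (N *v f m0) < 0" using N m0 unfolding neg_definite_def by blast
  ultimately show ?thesis by linarith
qed

lemma inner_kron_mat1_left:
  "x \<bullet> (kron (mat 1) N *v x) = (\<Sum>m\<in>UNIV. block x m \<bullet> (N *v block x m))"
proof -
  have "x \<bullet> (kron (mat 1) N *v x) = (\<Sum>m\<in>UNIV. \<Sum>a\<in>UNIV. x $ (m, a) * (\<Sum>z\<in>UNIV. N $ a $ z * x $ (m, z)))"
    by (simp add: inner_real_vec kron_mat1_left_mv sum_UNIV_prod[where f = "\<lambda>r. x $ r * _ r"])
  then show ?thesis by (simp add: inner_real_vec block_def matrix_vector_mult_def)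
qed

lemma inner_kron_mat1_right:
  "x \<bullet> (kron N (mat 1) *v x) = (\<Sum>b\<in>UNIV. (\<chi> a. x $ (a, b)) \<bullet> (N *v (\<chi> a. x $ (a, b))))"
proof -
  have "x \<bullet> (kron N (mat 1) *v x) = (\<Sum>a\<in>UNIV. \<Sum>b\<in>UNIV. x $ (a, b) * (\<Sum>y\<in>UNIV. N $ a $ y * x $ (y, b)))"
    by (simp add: inner_real_vec kron_mat1_right_mv sum_UNIV_prod[where f = "\<lambda>r. x $ r * _ r"])
  also have "\<dots> = (\<Sum>b\<in>UNIV. \<Sum>a\<in>UNIV. x $ (a, b) * (\<Sum>y\<in>UNIV. N $ a $ y * x $ (y, b)))"
    by (rule sum.swap)
  also have "\<dots> = (\<Sum>b\<in>UNIV. (\<chi> a. x $ (a, b)) \<bullet> (N *v (\<chi> a. x $ (a, b))))"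
    by (simp add: inner_real_vec matrix_vector_mult_def)
  finally show ?thesis .
qed

lemma neg_definite_kron_mat1_left: "neg_definite N \<Longrightarrow> neg_definite (kron (mat 1 :: real^'m::finite^'m) N)"
  unfolding neg_definite_def[of "kron _ _"] inner_kron_mat1_left
  by (metis block_eq_0_iff neg_definite_sum)

lemma neg_definite_kron_mat1_right: "neg_definite N \<Longrightarrow> neg_definite (kron N (mat 1 :: real^'m::finite^'m))"
proof -
  assume N: "neg_definite N"
  show ?thesis unfolding neg_definite_def
  proof (intro allI impI)
    fix x :: "real^('a \<times> 'm)" assume "x \<noteq> 0"
    then obtain r where "x $ r \<noteq> 0" by (auto simp: vec_eq_iff)
    hence "\<exists>b. (\<chi> a. x $ (a, b)) \<noteq> 0"
      by (intro exI[of _ "snd r"]) (auto simp: vec_eq_iff intro!: exI[of _ "fst r"])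
    thus "x \<bullet> (kron N (mat 1) *v x) < 0"
      unfolding inner_kron_mat1_right by (rule neg_definite_sum[OF N])
  qed
qed

section \<open>Block matrices driven by a Markov chain\<close>

definition fixed_nondegenerate :: "real^'n::finite^'n \<Rightarrow> real^'n^'n \<Rightarrow> bool" where
  "fixed_nondegenerate V N \<longleftrightarrow>
     (\<forall>s. V *v s = s \<longrightarrow> s \<noteq> 0 \<longrightarrow> (\<exists>t. transpose V *v t = t \<and> t \<bullet> (N *v s) \<noteq> 0))"

lemma fixed_nondegenerate_neg_definite:
  assumes "doubly_stochastic V" and "neg_definite N"
  shows "fixed_nondegenerate V N"
  using doubly_stochastic_fixed_transpose[OF assms(1)] assms(2)
  unfolding fixed_nondegenerate_def neg_definite_def by (metis less_irrefl)

lemma fixed_nondegenerate_kron_square: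
  fixes V :: "real^'x::finite^'x" and N :: "real^'x^'x"
  assumes V: "doubly_stochastic V" and sym: "\<And>x y. V $ x $ y > 0 \<Longrightarrow> V $ y $ x > 0"
    and N: "neg_definite N"
  shows "fixed_nondegenerate (kron V V) (kron N V + kron V N)"
  unfolding fixed_nondegenerate_def
proof (intro allI impI)
  fix s :: "real^('x\<times>'x)" assume fixed: "kron V V *v s = s" and nz: "s \<noteq> 0"
  define u where "u = kron V (mat 1) *v s"
  have u2: "u = kron (mat 1) V *v s" unfolding u_def by (rule kron_square_fixed_commute[OF V sym fixed])
  have commute: "kron V V ** kron V (mat 1) = kron V (mat 1) ** kron V V"
    by (simp add: kron_mult)
  have "kron V V *v u = u"
    unfolding u_def by (simp add: matrix_vector_mul_assoc commute) (simp add: matrix_vector_mul_assoc[symmetric] fixed)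
  then have u_fixed: "transpose (kron V V) *v u = u"
    by (rule doubly_stochastic_fixed_transpose[OF doubly_stochastic_kron[OF V V]])
  have d1: "kron N V *v s = kron N (mat 1) *v u"
  proof -
    have "kron N V = kron N (mat 1) ** kron (mat 1) V" by (simp add: kron_mult)
    thus ?thesis by (simp add: u2 matrix_vector_mul_assoc)
  qed
  have d2: "kron V N *v s = kron (mat 1) N *v u"
  proof -
    have "kron V N = kron (mat 1) N ** kron V (mat 1)" by (simp add: kron_mult)
    thus ?thesis by (simp add: u_def matrix_vector_mul_assoc)
  qed
  have unz: "u \<noteq> 0"
  proof
    assume "u = 0"
    have "kron V V = kron (mat 1) V ** kron V (mat 1)" by (simp add: kron_mult)
    hence "s = kron (mat 1) V *v u" using fixed by (simp add: u_def matrix_vector_mul_assoc)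
    with \<open>u = 0\<close> nz show False by simp
  qed
  have "u \<bullet> ((kron N V + kron V N) *v s) = u \<bullet> (kron N (mat 1) *v u) + u \<bullet> (kron (mat 1) N *v u)"
    by (simp add: matrix_vector_mult_add_rdistrib inner_add_right d1 d2)
  also have "\<dots> < 0"
    using neg_definite_kron_mat1_right[OF N] neg_definite_kron_mat1_left[OF N] unz unfolding neg_definite_def
    by (meson add_neg_neg)
  finally show "\<exists>t. transpose (kron V V) *v t = t \<and> t \<bullet> ((kron N V + kron V N) *v s) \<noteq> 0"
    using u_fixed by (intro exI[of _ u]) auto
qed

text \<open>The \<open>(j, i)\<close> block of \<open>block_matrix Q Hb\<close> is \<open>Q $ i $ j *\<^sub>R Hb i\<close>, the convention of \<open>H11\<close> and \<open>H22\<close>.\<close>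

definition block_matrix :: "real^'z^'z \<Rightarrow> ('z \<Rightarrow> real^'x^'x) \<Rightarrow> real^('z::finite\<times>'x::finite)^('z\<times>'x)" where
  "block_matrix Q Hb = (\<chi> r c. Q $ fst c $ fst r * Hb (fst c) $ snd r $ snd c)"

definition repeat_block :: "real^'x \<Rightarrow> real^('z::finite\<times>'x::finite)" where
  "repeat_block t = (\<chi> r. t $ snd r)"

lemma block_block_matrix_mv:
  "block (block_matrix Q Hb *v y) j = (\<Sum>i\<in>UNIV. Q $ i $ j *\<^sub>R (Hb i *v block y i))"
proof -
  have "block (block_matrix Q Hb *v y) j $ a
      = (\<Sum>c\<in>UNIV. Q $ fst c $ j * Hb (fst c) $ a $ snd c * y $ c)" for a
    by (simp add: block_def block_matrix_def matrix_vector_mult_def mult.assoc)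
  also have "\<dots> a = (\<Sum>i\<in>UNIV. \<Sum>b\<in>UNIV. Q $ i $ j * Hb i $ a $ b * y $ (i, b))" for a
    by (subst sum_UNIV_prod) simp
  finally show ?thesis
    by (simp add: vec_eq_iff block_def matrix_vector_mult_def sum_component sum_distrib_left mult.assoc)
qed

lemma inner_repeat_block: "repeat_block t \<bullet> y = (\<Sum>i\<in>UNIV. t \<bullet> block y i)"
  by (simp add: inner_real_vec repeat_block_def block_def sum_UNIV_prod[where f = "\<lambda>r. _ r * y $ r"])

lemma inner_repeat_block_block_matrix:
  assumes "stochastic_matrix Q"
  shows "repeat_block t \<bullet> (block_matrix Q Hb *v y) = (\<Sum>i\<in>UNIV. t \<bullet> (Hb i *v block y i))"
proof -
  have "repeat_block t \<bullet> (block_matrix Q Hb *v y)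
      = (\<Sum>j\<in>UNIV. \<Sum>i\<in>UNIV. Q $ i $ j * (t \<bullet> (Hb i *v block y i)))"
    by (simp add: inner_repeat_block block_block_matrix_mv inner_sum_right)
  also have "\<dots> = (\<Sum>i\<in>UNIV. (\<Sum>j\<in>UNIV. Q $ i $ j) * (t \<bullet> (Hb i *v block y i)))"
    by (subst sum.swap) (simp add: sum_distrib_right)
  finally show ?thesis using stochastic_matrix_row_sum[OF assms] by simp
qed

lemma block_matrix_linear:
  "block_matrix Q (\<lambda>i. X i + a *\<^sub>R Y i + b *\<^sub>R Z i)
     = block_matrix Q X + a *\<^sub>R block_matrix Q Y + b *\<^sub>R block_matrix Q Z"
  by (simp add: vec_eq_iff block_matrix_def algebra_simps)

context
  fixes Q :: "real^'z::finite^'z" and V :: "real^'x::finite^'x" and y :: "real^('z\<times>'x)"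
  assumes Q: "stochastic_matrix Q" and fixed: "block_matrix Q (\<lambda>_. V) *v y = y"
begin

lemma block_matrix_fixed_block: "block y j = (\<Sum>i\<in>UNIV. Q $ i $ j *\<^sub>R (V *v block y i))"
  by (subst (1) fixed[symmetric]) (rule block_block_matrix_mv)

lemma block_matrix_fixed_sum: "V *v (\<Sum>i\<in>UNIV. block y i) = (\<Sum>i\<in>UNIV. block y i)"
proof -
  have "(\<Sum>j\<in>UNIV. block y j) = (\<Sum>j\<in>UNIV. \<Sum>i\<in>UNIV. Q $ i $ j *\<^sub>R (V *v block y i))"
    by (rule sum.cong[OF refl block_matrix_fixed_block])
  also have "\<dots> = (\<Sum>i\<in>UNIV. (\<Sum>j\<in>UNIV. Q $ i $ j) *\<^sub>R (V *v block y i))"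
    by (subst sum.swap) (simp add: scaleR_sum_left)
  also have "\<dots> = V *v (\<Sum>i\<in>UNIV. block y i)"
    using stochastic_matrix_row_sum[OF Q] by (simp add: linear_sum[OF matrix_vector_mul_linear])
  finally show ?thesis by simp
qed

lemma block_matrix_fixed_iterate:
  "block y j = (\<Sum>i\<in>UNIV. mpow Q k $ i $ j *\<^sub>R (mpow V k *v block y i))"
proof (induction k arbitrary: j)
  case 0
  show ?case
    by (simp only: mpow.simps matrix_vector_mul_lid)
       (simp add: mat_def if_distrib[where f = "\<lambda>c. c *\<^sub>R _"] cong: if_cong)
next
  case (Suc k)
  have "block y j = (\<Sum>i\<in>UNIV. mpow Q k $ i $ j *\<^sub>R
      (mpow V k *v (\<Sum>l\<in>UNIV. Q $ l $ i *\<^sub>R (V *v block y l))))"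
    by (subst Suc.IH, rule sum.cong[OF refl], subst (1) block_matrix_fixed_block) (rule refl)
  also have "\<dots> = (\<Sum>i\<in>UNIV. \<Sum>l\<in>UNIV. (mpow Q k $ i $ j * Q $ l $ i) *\<^sub>R (mpow V (Suc k) *v block y l))"
    by (simp add: linear_sum[OF matrix_vector_mul_linear] scaleR_sum_right matrix_vector_mult_scaleR
        matrix_vector_mul_assoc mpow_Suc_right del: mpow.simps)
  also have "\<dots> = (\<Sum>l\<in>UNIV. mpow Q (Suc k) $ l $ j *\<^sub>R (mpow V (Suc k) *v block y l))"
    by (subst sum.swap) (simp add: matrix_matrix_mult_def scaleR_sum_left[symmetric] mult.commute)
  finally show ?case .
qed

lemma block_matrix_fixed_block_tendsto:
  assumes lim: "limiting_distribution Q pinf" and V: "doubly_stochastic V"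
  shows "(\<lambda>k. block y j - pinf $ j *\<^sub>R (mpow V k *v (\<Sum>i\<in>UNIV. block y i))) \<longlonglongrightarrow> 0"
proof (rule Lim_null_comparison)
  have "block y j - pinf $ j *\<^sub>R (mpow V k *v (\<Sum>i\<in>UNIV. block y i))
      = (\<Sum>i\<in>UNIV. (mpow Q k $ i $ j - pinf $ j) *\<^sub>R (mpow V k *v block y i))" for k
    by (subst (1) block_matrix_fixed_iterate[of _ k])
       (simp add: linear_sum[OF matrix_vector_mul_linear] scaleR_sum_right scaleR_left_diff_distrib
         sum_subtractf)
  then show "\<forall>\<^sub>F k in sequentially. norm (block y j - pinf $ j *\<^sub>R (mpow V k *v (\<Sum>i\<in>UNIV. block y i)))
      \<le> (\<Sum>i\<in>UNIV. \<bar>mpow Q k $ i $ j - pinf $ j\<bar> * norm (block y i))"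
    using doubly_stochastic_mpow_norm_le[OF V]
    by (intro always_eventually allI) (auto intro!: order_trans[OF norm_sum] sum_mono mult_left_mono)
  have "(\<lambda>k. \<Sum>i\<in>UNIV. \<bar>mpow Q k $ i $ j - pinf $ j\<bar> * norm (block y i))
      \<longlonglongrightarrow> (\<Sum>i\<in>UNIV. \<bar>pinf $ j - pinf $ j\<bar> * norm (block y i))"
    using lim unfolding limiting_distribution_def
    by (intro tendsto_sum tendsto_mult_right tendsto_rabs tendsto_diff tendsto_const) auto
  then show "(\<lambda>k. \<Sum>i\<in>UNIV. \<bar>mpow Q k $ i $ j - pinf $ j\<bar> * norm (block y i)) \<longlonglongrightarrow> 0"
    by simp
qed

text \<open>The iterates of \<open>V\<close> need not converge, but comparing two blocks cancels them.\<close>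

lemma block_matrix_fixed_point:
  assumes lim: "limiting_distribution Q pinf" and V: "doubly_stochastic V"
  shows "block y j = pinf $ j *\<^sub>R (\<Sum>i\<in>UNIV. block y i)"
proof -
  let ?S = "\<lambda>k. mpow V k *v (\<Sum>i\<in>UNIV. block y i)"
  have "pinf $ l *\<^sub>R block y j - pinf $ j *\<^sub>R block y l = 0" for l
  proof -
    have "(\<lambda>k. pinf $ l *\<^sub>R (block y j - pinf $ j *\<^sub>R ?S k) - pinf $ j *\<^sub>R (block y l - pinf $ l *\<^sub>R ?S k))
        \<longlonglongrightarrow> pinf $ l *\<^sub>R 0 - pinf $ j *\<^sub>R 0"
      by (intro tendsto_intros block_matrix_fixed_block_tendsto[OF lim V])
    then have "(\<lambda>k. pinf $ l *\<^sub>R block y j - pinf $ j *\<^sub>R block y l) \<longlonglongrightarrow> 0"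
      by (simp add: algebra_simps)
    then show ?thesis by (simp add: LIMSEQ_const_iff)
  qed
  then have "(\<Sum>l\<in>UNIV. pinf $ l) *\<^sub>R block y j = pinf $ j *\<^sub>R (\<Sum>l\<in>UNIV. block y l)"
    by (simp add: scaleR_sum_left scaleR_sum_right)
  then show ?thesis using limiting_distribution_sum[OF Q lim] by simp
qed

end

lemma block_singular_perturbation:
  fixes Q :: "real^'z::finite^'z" and V :: "real^'x::finite^'x" and D :: "'z \<Rightarrow> real^'x^'x"
  assumes Q: "stochastic_matrix Q" and lim: "limiting_distribution Q pinf"
    and V: "doubly_stochastic V" and nondeg: "fixed_nondegenerate V (\<Sum>i\<in>UNIV. pinf $ i *\<^sub>R D i)"
  shows "singular_perturbation (mat 1 - block_matrix Q (\<lambda>_. V)) (- block_matrix Q D)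
           {repeat_block t | t. transpose V *v t = t}"
proof unfold_locales
  fix l y :: "real^('z\<times>'x)" assume "l \<in> {repeat_block t | t. transpose V *v t = t}"
  then obtain t where l: "l = repeat_block t" and t: "transpose V *v t = t" by blast
  have "l \<bullet> (block_matrix Q (\<lambda>_. V) *v y) = l \<bullet> y"
    unfolding l inner_repeat_block_block_matrix[OF Q]
    by (simp only: inner_transpose_mv t inner_repeat_block)
  then show "l \<bullet> ((mat 1 - block_matrix Q (\<lambda>_. V)) *v y) = 0"
    by (simp add: matrix_vector_mult_diff_rdistrib inner_diff_right)
next
  fix y :: "real^('z\<times>'x)"
  assume kernel: "(mat 1 - block_matrix Q (\<lambda>_. V)) *v y = 0"
    and orthogonal: "\<forall>l\<in>{repeat_block t | t. transpose V *v t = t}. l \<bullet> ((- block_matrix Q D) *v y) = 0"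
  define S where "S = (\<Sum>i\<in>UNIV. block y i)"
  have fixed: "block_matrix Q (\<lambda>_. V) *v y = y"
    using kernel by (simp add: matrix_vector_mult_diff_rdistrib)
  have blocks: "block y i = pinf $ i *\<^sub>R S" for i
    unfolding S_def by (rule block_matrix_fixed_point[OF Q fixed lim V])
  show "y = 0"
  proof (rule ccontr)
    assume "y \<noteq> 0"
    then have "S \<noteq> 0" using blocks block_eq_0_iff by force
    then obtain t where t: "transpose V *v t = t" and nz: "t \<bullet> ((\<Sum>i\<in>UNIV. pinf $ i *\<^sub>R D i) *v S) \<noteq> 0"
      using nondeg block_matrix_fixed_sum[OF Q fixed, folded S_def] unfolding fixed_nondegenerate_def by blast
    have "repeat_block t \<bullet> (block_matrix Q D *v y) = t \<bullet> ((\<Sum>i\<in>UNIV. pinf $ i *\<^sub>R D i) *v S)"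
      by (simp add: inner_repeat_block_block_matrix[OF Q] blocks sum_matrix_vector_mult inner_sum_right
          matrix_vector_mult_scaleR scaleR_matrix_vector_assoc[symmetric])
    moreover have "repeat_block t \<bullet> ((- block_matrix Q D) *v y) = 0" using orthogonal t by blast
    ultimately show False using nz by (simp add: matrix_vector_mult_uminus)
  qed
qed

section \<open>The chain of transitions\<close>

lemma pairP_stochastic:
  assumes P: "stochastic_matrix P"
  shows "stochastic_matrix (pairP P)"
proof -
  have nn: "0 \<le> pairP P $ i $ j" for i j using stochastic_matrix_nonneg[OF P] by (simp add: pairP_def)
  have rs: "(\<Sum>j\<in>UNIV. pairP P $ i $ j) = 1" for i
  proof -
    have "(\<Sum>j\<in>UNIV. pairP P $ i $ j) = (\<Sum>s\<in>UNIV. \<Sum>s'\<in>UNIV. if snd i = s then P $ s $ s' else 0)"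
      unfolding pairP_def by (subst sum_UNIV_prod) (simp cong: if_cong)
    also have "\<dots> = (\<Sum>s'\<in>UNIV. \<Sum>s\<in>UNIV. if snd i = s then P $ s $ s' else 0)"
      by (rule sum.swap)
    also have "\<dots> = (\<Sum>s'\<in>UNIV. P $ snd i $ s')"
      by (simp only: sum.delta' finite UNIV_I if_True)
    also have "\<dots> = 1" using stochastic_matrix_row_sum[OF P] by simp
    finally show ?thesis .
  qed
  show ?thesis using nn rs by (simp add: stochastic_matrix_def)
qed

lemma pairP_row_sum_fst:
  assumes P: "stochastic_matrix P"
  shows "(\<Sum>j\<in>UNIV. pairP P $ i $ j * g (fst j)) = g (snd i)"
proof -
  have "(\<Sum>j\<in>UNIV. pairP P $ i $ j * g (fst j)) = (\<Sum>s\<in>UNIV. \<Sum>s'\<in>UNIV. (if snd i = s then P $ s $ s' * g s else 0))"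
    unfolding pairP_def by (subst sum_UNIV_prod) (simp add: if_distrib[where f = "\<lambda>x. x * _"] cong: if_cong)
  also have "\<dots> = (\<Sum>s'\<in>UNIV. \<Sum>s\<in>UNIV. if snd i = s then P $ s $ s' * g s else 0)"
    by (rule sum.swap)
  also have "\<dots> = (\<Sum>s'\<in>UNIV. P $ snd i $ s' * g (snd i))"
    by (simp only: sum.delta' finite UNIV_I if_True)
  also have "\<dots> = g (snd i)" using stochastic_matrix_row_sum[OF P] by (simp add: sum_distrib_right[symmetric])
  finally show ?thesis .
qed

lemma pair_limit_fst_snd:
  assumes P: "stochastic_matrix P" and lim: "limiting_distribution (pairP P) pinf"
  shows "(\<Sum>j\<in>UNIV. pinf $ j * g (fst j)) = (\<Sum>i\<in>UNIV. pinf $ i * g (snd i))"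
proof -
  have Qs: "stochastic_matrix (pairP P)" by (rule pairP_stochastic[OF P])
  have "(\<Sum>j\<in>UNIV. pinf $ j * g (fst j)) = (\<Sum>j\<in>UNIV. (\<Sum>i\<in>UNIV. pinf $ i * pairP P $ i $ j) * g (fst j))"
    by (simp only: limiting_distribution_stationary[OF Qs lim])
  also have "\<dots> = (\<Sum>i\<in>UNIV. pinf $ i * (\<Sum>j\<in>UNIV. pairP P $ i $ j * g (fst j)))"
    by (simp add: sum_distrib_right sum_distrib_left mult.assoc) (rule sum.swap)
  also have "\<dots> = (\<Sum>i\<in>UNIV. pinf $ i * g (snd i))"
    by (simp only: pairP_row_sum_fst[OF P])
  finally show ?thesis .
qed

lemma pair_limit_factor:
  assumes P: "stochastic_matrix P" and lim: "limiting_distribution (pairP P) pinf"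
  shows "pinf $ (s, s') = (\<Sum>u\<in>UNIV. pinf $ (u, s)) * P $ s $ s'"
proof -
  have Qs: "stochastic_matrix (pairP P)" by (rule pairP_stochastic[OF P])
  have "pinf $ (s, s') = (\<Sum>i\<in>UNIV. pinf $ i * pairP P $ i $ (s, s'))"
    by (simp only: limiting_distribution_stationary[OF Qs lim])
  also have "\<dots> = (\<Sum>u\<in>UNIV. \<Sum>v\<in>UNIV. if v = s then pinf $ (u, v) * P $ s $ s' else 0)"
    by (subst sum_UNIV_prod) (simp add: pairP_def if_distrib[where f = "\<lambda>x. _ * x"] cong: if_cong)
  also have "\<dots> = (\<Sum>u\<in>UNIV. pinf $ (u, s) * P $ s $ s')"
    by (simp only: sum.delta finite UNIV_I if_True)
  also have "\<dots> = (\<Sum>u\<in>UNIV. pinf $ (u, s)) * P $ s $ s'" by (simp add: sum_distrib_right)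
  finally show ?thesis .
qed

lemma stationary_mpow:
  assumes stat: "\<And>s'. (\<Sum>s\<in>UNIV. \<mu> s * P $ s $ s') = \<mu> s'"
  shows "(\<Sum>s\<in>UNIV. \<mu> s * mpow P k $ s $ s') = \<mu> s'"
proof (induction k arbitrary: s')
  case 0 show ?case by (simp add: mat_def if_distrib[where f = "\<lambda>x. _ * x"] cong: if_cong)
next
  case (Suc k)
  have "(\<Sum>s\<in>UNIV. \<mu> s * mpow P (Suc k) $ s $ s')
      = (\<Sum>s\<in>UNIV. \<Sum>w\<in>UNIV. \<mu> s * P $ s $ w * mpow P k $ w $ s')"
    by (simp add: matrix_matrix_mult_def sum_distrib_left mult.assoc)
  also have "\<dots> = (\<Sum>w\<in>UNIV. (\<Sum>s\<in>UNIV. \<mu> s * P $ s $ w) * mpow P k $ w $ s')"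
    by (subst sum.swap) (simp add: sum_distrib_right)
  also have "\<dots> = \<mu> s'" by (simp add: stat Suc.IH)
  finally show ?case .
qed

lemma irreducible_stationary_pos:
  assumes P: "stochastic_matrix P" and irr: "irreducible_chain P"
    and nonneg: "\<And>s. 0 \<le> \<mu> s" and total: "(\<Sum>s\<in>UNIV. \<mu> s) = 1"
    and stat: "\<And>s'. (\<Sum>s\<in>UNIV. \<mu> s * P $ s $ s') = \<mu> s'"
  shows "0 < \<mu> s"
proof -
  obtain u where u: "\<mu> u > 0"
    using total nonneg by (metis antisym not_le sum.neutral zero_neq_one)
  obtain k where k: "mpow P k $ u $ s > 0" using irr unfolding irreducible_chain_def by blast
  have "0 < \<mu> u * mpow P k $ u $ s" using u k by simp
  also have "\<dots> \<le> (\<Sum>v\<in>UNIV. \<mu> v * mpow P k $ v $ s)"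
    using nonneg stochastic_matrix_nonneg[OF stochastic_matrix_mpow[OF P]]
    by (intro member_le_sum) auto
  also have "\<dots> = \<mu> s" by (rule stationary_mpow[OF stat])
  finally show ?thesis .
qed

definition state_marginal :: "real^('s::finite\<times>'s) \<Rightarrow> 's \<Rightarrow> real" where
  "state_marginal pinf s = (\<Sum>s'\<in>UNIV. pinf $ (s, s'))"

lemma sum_pair_fst_state_marginal:
  "(\<Sum>j\<in>UNIV. pinf $ j * g (fst j)) = (\<Sum>s\<in>UNIV. state_marginal pinf s * g s)"
  by (subst sum_UNIV_prod) (simp add: state_marginal_def sum_distrib_right)

context
  fixes P :: "real^'s::finite^'s" and pinf :: "real^('s\<times>'s)"
  assumes P: "stochastic_matrix P" and lim: "limiting_distribution (pairP P) pinf"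
begin

lemma state_marginal_nonneg: "0 \<le> state_marginal pinf s"
  using limiting_distribution_nonneg[OF pairP_stochastic[OF P] lim]
  by (simp add: state_marginal_def sum_nonneg)

lemma state_marginal_sum: "(\<Sum>s\<in>UNIV. state_marginal pinf s) = 1"
  using limiting_distribution_sum[OF pairP_stochastic[OF P] lim]
  unfolding state_marginal_def by (simp add: sum_UNIV_prod[symmetric])

lemma state_marginal_snd: "state_marginal pinf s = (\<Sum>u\<in>UNIV. pinf $ (u, s))"
proof -
  have "state_marginal pinf s = (\<Sum>s'\<in>UNIV. (\<Sum>u\<in>UNIV. pinf $ (u, s)) * P $ s $ s')"
    unfolding state_marginal_def by (rule sum.cong[OF refl]) (rule pair_limit_factor[OF P lim])
  also have "\<dots> = (\<Sum>u\<in>UNIV. pinf $ (u, s))"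
    using stochastic_matrix_row_sum[OF P] by (simp add: sum_distrib_left[symmetric])
  finally show ?thesis .
qed

lemma state_marginal_stationary:
  "(\<Sum>s\<in>UNIV. state_marginal pinf s * P $ s $ s') = state_marginal pinf s'"
proof -
  have "(\<Sum>s\<in>UNIV. state_marginal pinf s * P $ s $ s') = (\<Sum>s\<in>UNIV. pinf $ (s, s'))"
    by (rule sum.cong[OF refl]) (simp only: state_marginal_snd pair_limit_factor[OF P lim, of _ s'])
  also have "\<dots> = state_marginal pinf s'" by (simp add: state_marginal_snd)
  finally show ?thesis .
qed

lemma state_marginal_pos: "irreducible_chain P \<Longrightarrow> 0 < state_marginal pinf s"
  by (rule irreducible_stationary_pos[OF P _ state_marginal_nonneg state_marginal_sum
        state_marginal_stationary])

end

section \<open>The moment matrices of decentralized TD(0)\<close>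

lemma Amat_mv:
  "(Amat phi \<gamma> i *v x) $ a = phi (fst i) $ a * (\<gamma> * (x \<bullet> phi (snd i)) - x \<bullet> phi (fst i))"
  by (simp add: Amat_def inner_real_vec matrix_vector_mult_def right_diff_distrib sum_distrib_left
      sum_subtractf mult.assoc mult.left_commute mult.commute)

lemma inner_Amat:
  "x \<bullet> (Amat phi \<gamma> i *v x) = (x \<bullet> phi (fst i)) * (\<gamma> * (x \<bullet> phi (snd i)) - x \<bullet> phi (fst i))"
proof -
  define c where "c = \<gamma> * (x \<bullet> phi (snd i)) - x \<bullet> phi (fst i)"
  have "x \<bullet> (Amat phi \<gamma> i *v x) = (\<Sum>a\<in>UNIV. x $ a * (phi (fst i) $ a * c))"
    unfolding inner_real_vec[of x "Amat phi \<gamma> i *v x"] by (simp only: Amat_mv c_def)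
  also have "\<dots> = (\<Sum>a\<in>UNIV. x $ a * phi (fst i) $ a) * c"
    by (simp add: sum_distrib_right mult.assoc)
  also have "\<dots> = (x \<bullet> phi (fst i)) * c" by (simp add: inner_real_vec)
  finally show ?thesis by (simp add: c_def)
qed

lemma inner_Abar:
  "x \<bullet> (Abar phi \<gamma> pinf *v x) = (\<Sum>i\<in>UNIV. pinf $ i * (x \<bullet> (Amat phi \<gamma> i *v x)))"
  by (simp add: Abar_def sum_matrix_vector_mult inner_sum_right scaleR_matrix_vector_assoc[symmetric])

text \<open>With \<open>f s = x \<bullet> phi s\<close>, AM-GM and the equality of the two marginals of \<open>pinf\<close> give
  \<open>x \<bullet> (Abar *v x) \<le> (\<gamma> - 1) * E f(s)\<^sup>2\<close>, and the expectation is positive since the stationary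
  marginal charges every state.\<close>

lemma Abar_neg_definite:
  fixes P :: "real^'s::finite^'s" and phi :: "'s \<Rightarrow> real^'p::finite"
  assumes P: "stochastic_matrix P" and irr: "irreducible_chain P" and lim: "limiting_distribution (pairP P) pinf"
    and li: "lin_indep_features phi" and g0: "0 < \<gamma>" and g1: "\<gamma> < 1"
  shows "neg_definite (Abar phi \<gamma> pinf)"
  unfolding neg_definite_def
proof (intro allI impI)
  fix x :: "real^'p" assume x: "x \<noteq> 0"
  have Qs: "stochastic_matrix (pairP P)" by (rule pairP_stochastic[OF P])
  define f where "f s = x \<bullet> phi s" for s
  define A where "A = (\<Sum>i\<in>UNIV. pinf $ i * (f (fst i))\<^sup>2)"
  have trm: "pinf $ i * (f (fst i) * (\<gamma> * f (snd i) - f (fst i)))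
      \<le> pinf $ i * (\<gamma> / 2 * (f (fst i))\<^sup>2 + \<gamma> / 2 * (f (snd i))\<^sup>2 - (f (fst i))\<^sup>2)" for i
  proof -
    have "f (fst i) * f (snd i) \<le> ((f (fst i))\<^sup>2 + (f (snd i))\<^sup>2) / 2"
      using sum_squares_bound[of "f (fst i)" "f (snd i)"] by simp
    hence "\<gamma> * (f (fst i) * f (snd i)) \<le> \<gamma> * (((f (fst i))\<^sup>2 + (f (snd i))\<^sup>2) / 2)"
      using g0 by (simp add: mult_left_mono)
    hence "f (fst i) * (\<gamma> * f (snd i) - f (fst i)) \<le> \<gamma> / 2 * (f (fst i))\<^sup>2 + \<gamma> / 2 * (f (snd i))\<^sup>2 - (f (fst i))\<^sup>2"
      by (simp add: algebra_simps power2_eq_square)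
    thus ?thesis using limiting_distribution_nonneg[OF Qs lim, of i] by (simp add: mult_left_mono)
  qed
  have B: "(\<Sum>i\<in>UNIV. pinf $ i * (f (snd i))\<^sup>2) = A"
    unfolding A_def using pair_limit_fst_snd[OF P lim, of "\<lambda>s. (f s)\<^sup>2"] by simp
  have "x \<bullet> (Abar phi \<gamma> pinf *v x) = (\<Sum>i\<in>UNIV. pinf $ i * (f (fst i) * (\<gamma> * f (snd i) - f (fst i))))"
    by (simp add: inner_Abar inner_Amat f_def)
  also have "\<dots> \<le> (\<Sum>i\<in>UNIV. pinf $ i * (\<gamma> / 2 * (f (fst i))\<^sup>2 + \<gamma> / 2 * (f (snd i))\<^sup>2 - (f (fst i))\<^sup>2))"
    by (rule sum_mono) (rule trm)
  also have "\<dots> = \<gamma> / 2 * A + \<gamma> / 2 * (\<Sum>i\<in>UNIV. pinf $ i * (f (snd i))\<^sup>2) - A"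
    unfolding A_def by (simp add: algebra_simps sum.distrib sum_subtractf sum_distrib_left)
  also have "\<dots> = (\<gamma> - 1) * A" by (simp add: B algebra_simps)
  finally have le: "x \<bullet> (Abar phi \<gamma> pinf *v x) \<le> (\<gamma> - 1) * A" .
  obtain s0 where s0: "f s0 \<noteq> 0"
  proof (rule ccontr)
    assume "\<not> thesis"
    hence "\<forall>s. f s = 0" using that by blast
    hence "\<forall>s. (\<Sum>k\<in>UNIV. x $ k * phi s $ k) = 0" by (simp add: f_def inner_real_vec)
    hence "x = 0" using li unfolding lin_indep_features_def by blast
    with x show False by simp
  qed
  have "A = (\<Sum>s\<in>UNIV. state_marginal pinf s * (f s)\<^sup>2)" unfolding A_def by (rule sum_pair_fst_state_marginal)
  also have "\<dots> > 0"
    by (rule sum_pos2[where i = s0]) (use state_marginal_pos[OF P lim irr] state_marginal_nonneg[OF P lim] s0 in auto)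
  finally have "A > 0" .
  hence "(\<gamma> - 1) * A < 0" using g1 by (simp add: mult_neg_pos)
  with le show "x \<bullet> (Abar phi \<gamma> pinf *v x) < 0" by linarith
qed

lemma uq_scale: "uq P pinf phi \<gamma> R \<theta> \<alpha> = \<alpha> *\<^sub>R uq P pinf phi \<gamma> R \<theta> 1"
  by (subst (1 2) uq_def) (simp add: vec_eq_iff Gvec_def sum_distrib_left mult.left_commute)

lemma Gvec_component:
  "Gvec R phi \<gamma> \<theta> 1 i $ (m, a) = bvec R phi m i $ a + (Amat phi \<gamma> i *v \<theta>) $ a"
  by (simp add: Gvec_def vecm_def Bmat_def Theta_def matrix_matrix_mult_def matrix_vector_mult_def)

lemma average_Gvec_agent_sum:
  fixes R :: "'m::finite \<Rightarrow> 's::finite \<Rightarrow> 's \<Rightarrow> real" and phi :: "'s \<Rightarrow> real^'p::finite"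
  shows "(\<Sum>i\<in>UNIV. pinf $ i * (\<Sum>m\<in>UNIV. Gvec R phi \<gamma> \<theta> 1 i $ (m, a)))
       = real CARD('m) * (Abar phi \<gamma> pinf *v \<theta> + bbar R phi pinf) $ a"
proof -
  have A: "(Abar phi \<gamma> pinf *v \<theta>) $ a = (\<Sum>i\<in>UNIV. pinf $ i * (Amat phi \<gamma> i *v \<theta>) $ a)"
    by (simp add: Abar_def matrix_vector_mult_def sum_component sum_distrib_left sum_distrib_right mult.assoc)
       (rule sum.swap)
  have B: "real CARD('m) * bbar R phi pinf $ a = (\<Sum>m\<in>UNIV. \<Sum>i\<in>UNIV. pinf $ i * bvec R phi m i $ a)"
    by (simp add: bbar_def sum_component)
  have "(\<Sum>i\<in>UNIV. pinf $ i * (\<Sum>m\<in>UNIV. Gvec R phi \<gamma> \<theta> 1 i $ (m, a)))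
      = (\<Sum>i\<in>UNIV. pinf $ i * (\<Sum>m\<in>UNIV. bvec R phi m i $ a) + real CARD('m) * (pinf $ i * (Amat phi \<gamma> i *v \<theta>) $ a))"
    by (simp add: Gvec_component sum.distrib algebra_simps)
  also have "\<dots> = (\<Sum>m\<in>UNIV. \<Sum>i\<in>UNIV. pinf $ i * bvec R phi m i $ a) + real CARD('m) * (\<Sum>i\<in>UNIV. pinf $ i * (Amat phi \<gamma> i *v \<theta>) $ a)"
    by (simp add: sum.distrib sum_distrib_left) (rule sum.swap)
  also have "\<dots> = real CARD('m) * (Abar phi \<gamma> pinf *v \<theta> + bbar R phi pinf) $ a"
    by (simp add: A B[symmetric] algebra_simps)
  finally show ?thesis .
qed

lemma block_uq:
  "block (uq P pinf phi \<gamma> R \<theta> \<alpha>) j = (\<Sum>i\<in>UNIV. (pairP P $ i $ j * pinf $ i) *\<^sub>R Gvec R phi \<gamma> \<theta> \<alpha> i)"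
  by (simp add: vec_eq_iff block_def uq_def sum_component)

text \<open>This is where the fixed-point equation of \<open>\<theta>s\<close> enters.\<close>

lemma uq_orthogonal_fixed:
  fixes P :: "real^'s::finite^'s" and phi :: "'s \<Rightarrow> real^'p::finite" and W :: "real^'m::finite^'m"
    and R :: "'m \<Rightarrow> 's \<Rightarrow> 's \<Rightarrow> real"
  assumes P: "stochastic_matrix P" and W: "doubly_stochastic W" and con: "connected_undirected_pattern W"
    and eq: "Abar phi \<gamma> pinf *v \<theta> + bbar R phi pinf = 0"
    and t: "transpose (kron W (mat 1 :: real^'p^'p)) *v t = t"
  shows "(repeat_block t :: real^(('s\<times>'s)\<times>('m\<times>'p))) \<bullet> uq P pinf phi \<gamma> R \<theta> 1 = 0"
proof -
  define \<tau> where "\<tau> a = t $ (undefined, a)" for a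
  have t_const: "t $ (m, a) = \<tau> a" for m a
    unfolding \<tau>_def by (rule kron_mat1_transpose_fixed_const[OF W con t])
  let ?g = "Gvec R phi \<gamma> \<theta> 1"
  have "(repeat_block t :: real^(('s\<times>'s)\<times>('m\<times>'p))) \<bullet> uq P pinf phi \<gamma> R \<theta> 1
      = (\<Sum>j\<in>UNIV. \<Sum>i\<in>UNIV. pairP P $ i $ j * (pinf $ i * (t \<bullet> ?g i)))"
    by (simp add: inner_repeat_block block_uq inner_sum_right mult.assoc)
  also have "\<dots> = (\<Sum>i\<in>UNIV. pinf $ i * (t \<bullet> ?g i))"
    using stochastic_matrix_row_sum[OF pairP_stochastic[OF P]]
    by (subst sum.swap) (simp add: sum_distrib_right[symmetric])
  also have "\<dots> = (\<Sum>i\<in>UNIV. \<Sum>a\<in>UNIV. \<tau> a * (pinf $ i * (\<Sum>m\<in>UNIV. ?g i $ (m, a))))"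
    by (simp add: inner_real_vec sum_UNIV_prod[where f = "\<lambda>x. t $ x * _ x"] t_const sum_distrib_left
        ac_simps, subst sum.swap, simp)
  also have "\<dots> = (\<Sum>a\<in>UNIV. \<tau> a * (\<Sum>i\<in>UNIV. pinf $ i * (\<Sum>m\<in>UNIV. ?g i $ (m, a))))"
    by (subst sum.swap) (simp add: sum_distrib_left)
  also have "\<dots> = 0" by (simp add: average_Gvec_agent_sum eq)
  finally show ?thesis .
qed

lemma H11_expand:
  "mat 1 - H11 P phi \<gamma> W \<alpha> = (mat 1 - block_matrix (pairP P) (\<lambda>_. kron W (mat 1)))
      + \<alpha> *\<^sub>R (- block_matrix (pairP P) (\<lambda>i. kron (mat 1) (Amat phi \<gamma> i))) + \<alpha>\<^sup>2 *\<^sub>R 0"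
proof -
  have "H11 P phi \<gamma> W \<alpha> = block_matrix (pairP P) (\<lambda>i. kron W (mat 1) + \<alpha> *\<^sub>R kron (mat 1) (Amat phi \<gamma> i) + \<alpha>\<^sup>2 *\<^sub>R 0)"
    by (simp add: H11_def block_matrix_def Hmat_def algebra_simps)
  also have "\<dots> = block_matrix (pairP P) (\<lambda>_. kron W (mat 1)) + \<alpha> *\<^sub>R block_matrix (pairP P) (\<lambda>i. kron (mat 1) (Amat phi \<gamma> i)) + \<alpha>\<^sup>2 *\<^sub>R block_matrix (pairP P) (\<lambda>_. 0)"
    by (rule block_matrix_linear)
  finally show ?thesis by (simp add: block_matrix_def vec_eq_iff)
qed

lemma H22_expand:
  fixes W :: "real^'m::finite^'m" and phi :: "'s::finite \<Rightarrow> real^'p::finite" and \<gamma> :: real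
  defines "V1 \<equiv> kron W (mat 1 :: real^'p^'p)"
  defines "D1 \<equiv> \<lambda>i. kron (mat 1 :: real^'m^'m) (Amat phi \<gamma> i)"
  shows "mat 1 - H22 P phi \<gamma> W \<alpha> = (mat 1 - block_matrix (pairP P) (\<lambda>_. kron V1 V1))
      + \<alpha> *\<^sub>R (- block_matrix (pairP P) (\<lambda>i. kron (D1 i) V1 + kron V1 (D1 i)))
      + \<alpha>\<^sup>2 *\<^sub>R (- block_matrix (pairP P) (\<lambda>i. kron (D1 i) (D1 i)))"
proof -
  have "H22 P phi \<gamma> W \<alpha> = block_matrix (pairP P) (\<lambda>i. kron V1 V1 + \<alpha> *\<^sub>R (kron (D1 i) V1 + kron V1 (D1 i)) + \<alpha>\<^sup>2 *\<^sub>R kron (D1 i) (D1 i))"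
    by (simp add: H22_def block_matrix_def Hmat_def kron_def V1_def D1_def algebra_simps power2_eq_square)
  also have "\<dots> = block_matrix (pairP P) (\<lambda>_. kron V1 V1) + \<alpha> *\<^sub>R block_matrix (pairP P) (\<lambda>i. kron (D1 i) V1 + kron V1 (D1 i)) + \<alpha>\<^sup>2 *\<^sub>R block_matrix (pairP P) (\<lambda>i. kron (D1 i) (D1 i))"
    by (rule block_matrix_linear)
  finally show ?thesis by (simp add: algebra_simps)
qed

lemma average_kron_mat1_Amat:
  "(\<Sum>i\<in>UNIV. pinf $ i *\<^sub>R kron (mat 1 :: real^'m::finite^'m) (Amat phi \<gamma> i)) = kron (mat 1) (Abar phi \<gamma> pinf)"
  by (simp add: vec_eq_iff kron_def Abar_def sum_component sum_distrib_left mult.left_commute)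

lemma average_kron_sum:
  "(\<Sum>i\<in>UNIV. pinf $ i *\<^sub>R (kron (D i) V + kron V (D i)))
     = kron (\<Sum>i\<in>UNIV. pinf $ i *\<^sub>R D i) V + kron V (\<Sum>i\<in>UNIV. pinf $ i *\<^sub>R D i)"
  by (simp add: vec_eq_iff kron_def sum_component sum.distrib sum_distrib_left sum_distrib_right
      algebra_simps)

lemma kron_mat1_support_sym:
  fixes W :: "real^'m::finite^'m"
  assumes W: "doubly_stochastic W" and con: "connected_undirected_pattern W"
    and pos: "kron W (mat 1 :: real^'p::finite^'p) $ x $ y > 0"
  shows "kron W (mat 1 :: real^'p^'p) $ y $ x > 0"
proof -
  from pos have same: "snd x = snd y" and w: "W $ fst x $ fst y > 0"
    by (auto simp: kron_def mat_def split: if_splits)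
  have "W $ fst y $ fst x \<noteq> 0"
  proof (cases "fst x = fst y")
    case False
    then have "(fst x, fst y) \<in> pattern_edges W" using w by (simp add: pattern_edges_def)
    then have "(fst y, fst x) \<in> pattern_edges W"
      using con unfolding connected_undirected_pattern_def by (meson symD)
    then show ?thesis by (simp add: pattern_edges_def)
  qed (use w in simp)
  then show ?thesis
    using same doubly_stochastic_nonneg[OF W, of "fst y" "fst x"] by (simp add: kron_def mat_def)
qed

lemma H21_expand:
  "H21 P phi \<gamma> W R \<theta> \<alpha> =
     \<alpha> *\<^sub>R (\<chi> r c. pairP P $ fst c $ fst r *
        (kron W (mat 1) $ fst (snd r) $ snd c * Gvec R phi \<gamma> \<theta> 1 (fst c) $ snd (snd r)
         + Gvec R phi \<gamma> \<theta> 1 (fst c) $ fst (snd r) * kron W (mat 1) $ snd (snd r) $ snd c))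
   + \<alpha>\<^sup>2 *\<^sub>R (\<chi> r c. pairP P $ fst c $ fst r *
        (kron (mat 1) (Amat phi \<gamma> (fst c)) $ fst (snd r) $ snd c * Gvec R phi \<gamma> \<theta> 1 (fst c) $ snd (snd r)
         + Gvec R phi \<gamma> \<theta> 1 (fst c) $ fst (snd r) * kron (mat 1) (Amat phi \<gamma> (fst c)) $ snd (snd r) $ snd c))"
  by (simp add: vec_eq_iff H21_def Hmat_def Gvec_def algebra_simps power2_eq_square)

lemma uQ_expand:
  "uQ P pinf phi \<gamma> R \<theta> \<alpha> = \<alpha>\<^sup>2 *\<^sub>R (\<chi> r. \<Sum>i\<in>UNIV. pairP P $ i $ fst r * pinf $ i *
      (Gvec R phi \<gamma> \<theta> 1 i $ fst (snd r) * Gvec R phi \<gamma> \<theta> 1 i $ snd (snd r)))"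
  by (simp add: vec_eq_iff uQ_def Gvec_def sum_distrib_left power2_eq_square algebra_simps)

lemma Cdelta_bound:
  "\<bar>Cdelta (Q :: real^(('z::finite)\<times>((('m::finite)\<times>('p::finite))\<times>('m\<times>'p))))\<bar>
     \<le> real CARD('z) * real CARD('p) * norm Q"
proof -
  have "\<bar>\<Sum>j\<in>UNIV. \<Sum>x\<in>UNIV. Q $ (j, (x, x))\<bar> \<le> (\<Sum>j\<in>UNIV. \<Sum>x\<in>UNIV. \<bar>Q $ (j, (x, x))\<bar>)"
    by (rule order_trans[OF sum_abs]) (intro sum_mono sum_abs)
  also have "\<dots> \<le> (\<Sum>j\<in>(UNIV::'z set). \<Sum>x\<in>(UNIV::('m\<times>'p) set). norm Q)"
    by (intro sum_mono component_le_norm_cart)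
  finally show ?thesis by (simp add: Cdelta_def abs_mult pos_divide_le_eq ac_simps)
qed

section \<open>Orders of magnitude\<close>

lemma eventually_at_right_lt_1: "\<forall>\<^sub>F \<alpha> in at_right (0::real). \<alpha> < 1"
  unfolding eventually_at_right_field by (intro exI[of _ 1]) auto

lemma affine_quadratic_bigo:
  fixes K1 K2 :: "real^'n::finite^'m::finite" and U :: "real^'m" and q :: "real \<Rightarrow> real^'n"
  assumes q: "(\<lambda>\<alpha>. norm (q \<alpha>)) \<in> O[at_right 0](\<lambda>\<alpha>. \<alpha>)"
  shows "(\<lambda>\<alpha>. norm ((\<alpha> *\<^sub>R K1 + \<alpha>\<^sup>2 *\<^sub>R K2) *v q \<alpha> + \<alpha>\<^sup>2 *\<^sub>R U)) \<in> O[at_right 0](\<lambda>\<alpha>. \<alpha>\<^sup>2)"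
proof -
  obtain C where "C > 0" and "\<forall>\<^sub>F \<alpha> in at_right 0. norm (q \<alpha>) \<le> C * \<bar>\<alpha>\<bar>"
    using q by (elim landau_o.bigE) auto
  from this(2) eventually_at_right_less have qC: "\<forall>\<^sub>F \<alpha> in at_right 0. norm (q \<alpha>) \<le> C * \<alpha>"
    by eventually_elim simp
  define B1 where "B1 = onorm ((*v) K1)"
  define B2 where "B2 = onorm ((*v) K2)"
  have B: "norm (K *v x) \<le> onorm ((*v) K) * norm x" "0 \<le> onorm ((*v) K)" for K :: "real^'n^'m" and x
    using onorm onorm_pos_le matrix_vector_mul_bounded_linear by blast+
  have "\<forall>\<^sub>F \<alpha> in at_right 0. norm (norm ((\<alpha> *\<^sub>R K1 + \<alpha>\<^sup>2 *\<^sub>R K2) *v q \<alpha> + \<alpha>\<^sup>2 *\<^sub>R U))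
      \<le> (B1 * C + B2 * C + norm U) * norm (\<alpha>\<^sup>2)"
    using qC eventually_at_right_less eventually_at_right_lt_1
  proof eventually_elim
    case (elim \<alpha>)
    have "norm ((\<alpha> *\<^sub>R K1 + \<alpha>\<^sup>2 *\<^sub>R K2) *v q \<alpha> + \<alpha>\<^sup>2 *\<^sub>R U)
        \<le> \<alpha> * norm (K1 *v q \<alpha>) + \<alpha>\<^sup>2 * norm (K2 *v q \<alpha>) + \<alpha>\<^sup>2 * norm U"
      using elim(2) by (simp add: matrix_vector_mult_add_rdistrib scaleR_matrix_vector_assoc[symmetric]
          norm_triangle_le norm_triangle_mono)
    also have "\<dots> \<le> \<alpha> * (B1 * (C * \<alpha>)) + \<alpha>\<^sup>2 * (B2 * (C * \<alpha>)) + \<alpha>\<^sup>2 * norm U"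
    proof -
      have "norm (K *v q \<alpha>) \<le> onorm ((*v) K) * (C * \<alpha>)" for K :: "real^'n^'m"
        using order_trans[OF B(1) mult_left_mono[OF elim(1) B(2)]] .
      then show ?thesis
        unfolding B1_def B2_def using elim(2) by (intro add_mono mult_left_mono) auto
    qed
    also have "\<dots> \<le> (B1 * C + B2 * C + norm U) * \<alpha>\<^sup>2"
    proof -
      have "B2 * (C * \<alpha>) \<le> B2 * C"
        using elim(3) \<open>C > 0\<close> B(2)[of K2] unfolding B2_def[symmetric]
        by (intro mult_left_mono mult_left_le) auto
      then have "\<alpha>\<^sup>2 * (B2 * (C * \<alpha>)) \<le> \<alpha>\<^sup>2 * (B2 * C)"
        by (rule mult_left_mono) simp
      then show ?thesis by (simp add: power2_eq_square algebra_simps)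
    qed
    finally show ?case by simp
  qed
  then show ?thesis by (rule bigoI)
qed

locale decentralized_td =
  fixes P :: "real^'s::finite^'s" and pinf :: "real^('s\<times>'s)" and phi :: "'s \<Rightarrow> real^'p::finite"
    and \<gamma> :: real and W :: "real^'m::finite^'m" and R :: "'m \<Rightarrow> 's \<Rightarrow> 's \<Rightarrow> real"
    and \<theta>s :: "real^'p"
  assumes stochastic: "stochastic_matrix P" and irreducible: "irreducible_chain P"
    and limit: "limiting_distribution (pairP P) pinf" and features: "lin_indep_features phi"
    and discount_pos: "0 < \<gamma>" and discount_lt_1: "\<gamma> < 1"
    and consensus: "doubly_stochastic W" and connected: "connected_undirected_pattern W"
    and fixed_point: "Abar phi \<gamma> pinf *v \<theta>s + bbar R phi pinf = 0"
begin

abbreviation V1 :: "real^('m\<times>'p)^('m\<times>'p)" where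
  "V1 \<equiv> kron W (mat 1)"

abbreviation D1 :: "'s \<times> 's \<Rightarrow> real^('m\<times>'p)^('m\<times>'p)" where
  "D1 i \<equiv> kron (mat 1) (Amat phi \<gamma> i)"

lemma V1_doubly_stochastic: "doubly_stochastic V1"
  by (rule doubly_stochastic_kron[OF consensus doubly_stochastic_mat1])

lemma average_D1_neg_definite: "neg_definite (\<Sum>i\<in>UNIV. pinf $ i *\<^sub>R D1 i)"
  unfolding average_kron_mat1_Amat
  by (rule neg_definite_kron_mat1_left[OF Abar_neg_definite[OF stochastic irreducible limit features
        discount_pos discount_lt_1]])

sublocale first: singular_perturbation "mat 1 - block_matrix (pairP P) (\<lambda>_. V1)"
  "- block_matrix (pairP P) D1" 0 "{repeat_block t | t. transpose V1 *v t = t}"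
  by (rule block_singular_perturbation[OF pairP_stochastic[OF stochastic] limit V1_doubly_stochastic
        fixed_nondegenerate_neg_definite[OF V1_doubly_stochastic average_D1_neg_definite]])

sublocale second: singular_perturbation "mat 1 - block_matrix (pairP P) (\<lambda>_. kron V1 V1)"
  "- block_matrix (pairP P) (\<lambda>i. kron (D1 i) V1 + kron V1 (D1 i))"
  "- block_matrix (pairP P) (\<lambda>i. kron (D1 i) (D1 i))"
  "{repeat_block t | t. transpose (kron V1 V1) *v t = t}"
proof (rule block_singular_perturbation[OF pairP_stochastic[OF stochastic] limit
      doubly_stochastic_kron[OF V1_doubly_stochastic V1_doubly_stochastic]])
  show "fixed_nondegenerate (kron V1 V1) (\<Sum>i\<in>UNIV. pinf $ i *\<^sub>R (kron (D1 i) V1 + kron V1 (D1 i)))"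
    unfolding average_kron_sum
    by (rule fixed_nondegenerate_kron_square[OF V1_doubly_stochastic
          kron_mat1_support_sym[OF consensus connected] average_D1_neg_definite])
qed

lemma eventually_invertible_H11_H22:
  "\<forall>\<^sub>F \<alpha> in at_right 0. invertible (mat 1 - H11 P phi \<gamma> W \<alpha>) \<and> invertible (mat 1 - H22 P phi \<gamma> W \<alpha>)"
  using first.eventually_invertible second.eventually_invertible
  by eventually_elim (simp add: H11_expand H22_expand)

lemma qinf_bigo: "(\<lambda>\<alpha>. norm (qinf P pinf phi \<gamma> W R \<theta>s \<alpha>)) \<in> O[at_right 0](\<lambda>\<alpha>. \<alpha>)"
proof -
  have "\<forall>l\<in>{repeat_block t | t. transpose V1 *v t = t}. l \<bullet> uq P pinf phi \<gamma> R \<theta>s 1 = 0"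
    using uq_orthogonal_fixed[OF stochastic consensus connected fixed_point] by blast
  moreover have "qinf P pinf phi \<gamma> W R \<theta>s \<alpha> = matrix_inv (first.M \<alpha>) *v (\<alpha> *\<^sub>R uq P pinf phi \<gamma> R \<theta>s 1)"
    for \<alpha>
    unfolding qinf_def H11_expand by (subst uq_scale) (rule refl)
  ultimately show ?thesis using first.inverse_orthogonal_bigo by presburger
qed

lemma Qinf_bigo: "(\<lambda>\<alpha>. norm (Qinf P pinf phi \<gamma> W R \<theta>s \<alpha>)) \<in> O[at_right 0](\<lambda>\<alpha>. \<alpha>)"
  using second.inverse_bigo[OF affine_quadratic_bigo[OF qinf_bigo]]
  by (simp add: Qinf_def H22_expand H21_expand uQ_expand)

lemma deltainf_bigo: "(\<lambda>\<alpha>. deltainf P pinf phi \<gamma> W R \<theta>s \<alpha>) \<in> O[at_right 0](\<lambda>\<alpha>. \<alpha>)"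
proof -
  have "(\<lambda>\<alpha>. deltainf P pinf phi \<gamma> W R \<theta>s \<alpha>) \<in> O[at_right 0](\<lambda>\<alpha>. norm (Qinf P pinf phi \<gamma> W R \<theta>s \<alpha>))"
    unfolding deltainf_def
    by (intro bigoI always_eventually allI) (simp only: real_norm_def abs_norm_cancel, rule Cdelta_bound)
  then show ?thesis using Qinf_bigo by (rule landau_o.big.trans)
qed

end

theorem mainTheorem4:
  fixes P :: "real^('s::finite)^'s" and pinf :: "real^('s\<times>'s)" and phi :: "'s \<Rightarrow> real^('p::finite)"
    and \<gamma> :: real and R :: "('m::finite) \<Rightarrow> 's \<Rightarrow> 's \<Rightarrow> real" and W :: "real^'m^'m"
    and \<theta>s :: "real^'p"
  assumes "stochastic_matrix P" and "irreducible_chain P" and "aperiodic_chain P"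
    and "limiting_distribution (pairP P) pinf"
    and "lin_indep_features phi"
    and "0 < \<gamma>" and "\<gamma> < 1"
    and "doubly_stochastic W" and "\<forall>i j. 0 \<le> W $ i $ j \<and> W $ i $ j \<le> 1"
    and "connected_undirected_pattern W"
    and "Abar phi \<gamma> pinf *v \<theta>s + bbar R phi pinf = 0"
  shows "\<exists>\<alpha>0>0.
     (\<forall>\<alpha>. 0 < \<alpha> \<and> \<alpha> < \<alpha>0 \<longrightarrow>
        invertible (mat 1 - H11 P phi \<gamma> W \<alpha>) \<and> invertible (mat 1 - H22 P phi \<gamma> W \<alpha>))
   \<and> (\<lambda>\<alpha>. norm (qinf P pinf phi \<gamma> W R \<theta>s \<alpha>)) \<in> O[at_right 0](\<lambda>\<alpha>. \<alpha>)
   \<and> (\<lambda>\<alpha>. norm (Qinf P pinf phi \<gamma> W R \<theta>s \<alpha>)) \<in> O[at_right 0](\<lambda>\<alpha>. \<alpha>)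
   \<and> (\<lambda>\<alpha>. deltainf P pinf phi \<gamma> W R \<theta>s \<alpha>) \<in> O[at_right 0](\<lambda>\<alpha>. \<alpha>)"
proof -
  txt \<open>Aperiodicity and the bounds on the entries of \<open>W\<close> are not needed: the limit \<open>pinf\<close> is assumed
    to exist.\<close>
  interpret decentralized_td P pinf phi \<gamma> W R \<theta>s
    by unfold_locales (use assms in auto)
  obtain \<alpha>0 where "\<alpha>0 > 0" and "\<forall>\<alpha>>0. \<alpha> < \<alpha>0 \<longrightarrow>
      invertible (mat 1 - H11 P phi \<gamma> W \<alpha>) \<and> invertible (mat 1 - H22 P phi \<gamma> W \<alpha>)"
    using eventually_invertible_H11_H22 unfolding eventually_at_right_field by blast
  then show ?thesis using qinf_bigo Qinf_bigo deltainf_bigo by blast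
qed

end
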